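(* Let $\sigma_e>0$, $\beta=(\beta_2,\beta_1)^T\in\mathbb{R}^2$. For every integer $n>2$ let $x_1,\dots,x_n\in\mathbb{R}$ be deterministic (possibly depending on $n$), $X_n$ the $n\times2$ matrix with rows $(1,x_i)$, $Y_n=(y_1,\dots,y_n)^T\sim\mathcal{N}(X_n\beta,\sigma_e^2I_{n\times n})$, and let $\Delta_n>0$, $\rho_n>0$ be sequences. Assume: (1) $\bar x\to c_x$, $\overline{x^2}\to c_{x^2}$ with $c_{x^2}>c_x^2$; (2) $\eta_n^2\to\eta^2$ for some $\eta\in\mathbb{R}$, where $\eta_n^2=\|X_n\beta-X_n\beta^N\|^2/\sigma_e^2$, $\beta^N=(\beta_2+\beta_1\bar x,0)^T$; (3) $\Delta_n^2/(\rho_nn)\to0$, $\Delta_n^4/(\rho_nn)\to0$; (4) $\mathbb{P}[\exists i,\ y_i\notin[-\Delta_n,\Delta_n]]\to0$ and $x_i\in[-\Delta_n,\Delta_n]$ for all $i$. Then, with the constants $c_y=\beta_2+\beta_1c_x$, $c_{xy}=\beta_2c_x+\beta_1c_{x^2}$, $c_a=c_{xy}-c_xc_y$, $c_b=c_{x^2}-c_x^2$, $c_{y^2}=\beta_2^2+2c_x\beta_1\beta_2+\beta_1^2c_{x^2}+\sigma_e^2$ and $C^{1/2}=\frac{1}{\sqrt{c_{x^2}+1+2\sqrt{c_b}}}\begin{pmatrix}1+\sqrt{c_b}&c_x\\c_x&c_{x^2}+\sqrt{c_b}\end{pmatrix}$: (1) $\sqrt n|\tilde{\bar x}-\bar x|\xrightarrow{P}0$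 and $\tilde{\bar x}\xrightarrow{P}c_x$; (2) $\sqrt n|\tilde{\bar y}-\bar y|\xrightarrow{P}0$ and $\tilde{\bar y}\xrightarrow{P}c_y$; (3) $\sqrt n|\widetilde{\overline{x^2}}-\overline{x^2}|\xrightarrow{P}0$ and $\widetilde{\overline{x^2}}\xrightarrow{P}c_{x^2}$; (4) $\sqrt n|\widetilde{\overline{xy}}-\overline{xy}|\xrightarrow{P}0$ and $\widetilde{\overline{xy}}\xrightarrow{P}c_{xy}$; (5) $\sqrt n|\tilde{\bar x}^2-\bar x^2|\xrightarrow{P}0$; (6) $\sqrt n|\tilde{\bar x}\tilde{\bar y}-\bar x\bar y|\xrightarrow{P}0$; (7) $\widetilde{\overline{xy}}-\tilde{\bar x}\tilde{\bar y}\xrightarrow{P}c_a$; (8) $\widetilde{\sigma^2_x}\xrightarrow{P}c_b$ (and $c_b\neq 0$); (9) $\sqrt n(\widetilde{\sigma^2_x}-\widehat{\sigma^2_x})\xrightarrow{P}0$; (10) $\sqrt n(\tilde E_n-\hat E_n)\xrightarrow{P}0$ and $\tilde E_n\xrightarrow{P}C^{1/2}$; (11) $\tilde F_n\xrightarrow{P}(c_y,c_{xy})^T$; (12) $\tilde G_n\xrightarrow{P}c_{y^2}$.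
   Context: $\bar x=\frac1n\sum x_i$, $\overline{x^2}=\frac1n\sum x_i^2$, $\bar y=\frac1n\sum y_i$, $\overline{xy}=\frac1n\sum x_iy_i$, $\widehat{\sigma^2_x}=\overline{x^2}-\bar x^2$, $\hat E_n=(X_n^TX_n/n)^{1/2}$ (positive-definite square root). $[z]_a^b$ is $z$ clipped to $[a,b]$. With $\Delta=\Delta_n$, $\rho'=\rho_n/5$ and independent Gaussian noises: $\tilde{\bar x}=\frac1n\sum_i[x_i]_{-\Delta}^{\Delta}+\mathcal{N}(0,\frac{2\Delta^2}{\rho'n^2})$, $\tilde{\bar y}=\frac1n\sum_i[y_i]_{-\Delta}^{\Delta}+\mathcal{N}(0,\frac{2\Delta^2}{\rho'n^2})$, $\widetilde{\overline{x^2}}=\frac1n\sum_i[x_i^2]_0^{\Delta^2}+\mathcal{N}(0,\frac{\Delta^4}{2\rho'n^2})$, $\widetilde{\overline{xy}}=\frac1n\sum_i[x_iy_i]_{-\Delta^2}^{\Delta^2}+\mathcal{N}(0,\frac{2\Delta^4}{\rho'n^2})$, $\widetilde{\overline{y^2}}=\frac1n\sum_i[y_i^2]_0^{\Delta^2}+\mathcal{N}(0,\frac{\Delta^4}{2\rho'n^2})$. Further $\widetilde{\sigma^2_x}=\widetilde{\overline{x^2}}-\tilde{\bar x}^2$, $\tilde E_n=\frac{1}{\sqrt{\widetilde{\overline{x^2}}+1+2\sqrt{\widetilde{\sigma^2_x}}}}\begin{pmatrix}1+\sqrt{\widetilde{\sigma^2_x}}&\tilde{\bar x}\\\tilde{\bar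 x}&\widetilde{\overline{x^2}}+\sqrt{\widetilde{\sigma^2_x}}\end{pmatrix}$ where square roots are taken with non-negative real and imaginary parts, $\tilde F_n=(\tilde{\bar y},\widetilde{\overline{xy}})^T$, $\tilde G_n=\widetilde{\overline{y^2}}$. Convergence is as $n\to\infty$. *)

theory Defs
  imports "HOL-Probability.Probability"
begin

definition clip :: "real \<Rightarrow> real \<Rightarrow> real \<Rightarrow> real" where
  "clip a b z = max a (min b z)"

definition mean :: "nat \<Rightarrow> (nat \<Rightarrow> real) \<Rightarrow> real" where
  "mean n f = (\<Sum>i<n. f i) / real n"

definition conv_prob :: "(nat \<Rightarrow> 'a measure) \<Rightarrow> (nat \<Rightarrow> 'a \<Rightarrow> 'b::metric_space) \<Rightarrow> 'b \<Rightarrow> bool" where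
  "conv_prob M X c \<longleftrightarrow>
     (\<forall>e>0. (\<lambda>n. measure (M n) {\<omega> \<in> space (M n). dist (X n \<omega>) c > e}) \<longlonglongrightarrow> 0)"

definition pd_sqrt :: "real^2^2 \<Rightarrow> real^2^2" where
  "pd_sqrt A = (THE S. transpose S = S \<and> (\<forall>v. v \<noteq> 0 \<longrightarrow> v \<bullet> (S *v v) > 0) \<and> S ** S = A)"

definition cmat :: "real^2^2 \<Rightarrow> complex^2^2" where
  "cmat A = (\<chi> i j. complex_of_real (A $ i $ j))"

text \<open>Hat-E_n = (X_n^T X_n / n)^{1/2}, where X_n has rows (1, x_i).\<close>
definition Ehat :: "(nat \<Rightarrow> nat \<Rightarrow> real) \<Rightarrow> nat \<Rightarrow> real^2^2" where
  "Ehat x n = pd_sqrt (\<chi> i j. mean n (\<lambda>k. (vector [1, x n k] :: real^2) $ i * (vector [1, x n k] :: real^2) $ j))"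

text \<open>Private statistics. Z n j \<omega> (j = 0..4) are standard normal variables; the Gaussian
  noise N(0, v) is realised as sqrt v * Z. Here rho' = rho n / 5.\<close>
definition tx :: "(nat \<Rightarrow> real) \<Rightarrow> (nat \<Rightarrow> real) \<Rightarrow> (nat \<Rightarrow> nat \<Rightarrow> real) \<Rightarrow> (nat \<Rightarrow> nat \<Rightarrow> 'a \<Rightarrow> real) \<Rightarrow> nat \<Rightarrow> 'a \<Rightarrow> real" where
  "tx \<Delta> \<rho> x Z n \<omega> = mean n (\<lambda>i. clip (- \<Delta> n) (\<Delta> n) (x n i))
      + sqrt (2 * (\<Delta> n)^2 / ((\<rho> n / 5) * (real n)^2)) * Z n 0 \<omega>"

definition ty :: "(nat \<Rightarrow> real) \<Rightarrow> (nat \<Rightarrow> real) \<Rightarrow> (nat \<Rightarrow> nat \<Rightarrow> 'a \<Rightarrow> real) \<Rightarrow> (nat \<Rightarrow> nat \<Rightarrow> 'a \<Rightarrow> real) \<Rightarrow> nat \<Rightarrow> 'a \<Rightarrow> real" where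
  "ty \<Delta> \<rho> y Z n \<omega> = mean n (\<lambda>i. clip (- \<Delta> n) (\<Delta> n) (y n i \<omega>))
      + sqrt (2 * (\<Delta> n)^2 / ((\<rho> n / 5) * (real n)^2)) * Z n 1 \<omega>"

definition tx2 :: "(nat \<Rightarrow> real) \<Rightarrow> (nat \<Rightarrow> real) \<Rightarrow> (nat \<Rightarrow> nat \<Rightarrow> real) \<Rightarrow> (nat \<Rightarrow> nat \<Rightarrow> 'a \<Rightarrow> real) \<Rightarrow> nat \<Rightarrow> 'a \<Rightarrow> real" where
  "tx2 \<Delta> \<rho> x Z n \<omega> = mean n (\<lambda>i. clip 0 ((\<Delta> n)^2) ((x n i)^2))
      + sqrt ((\<Delta> n)^4 / (2 * (\<rho> n / 5) * (real n)^2)) * Z n 2 \<omega>"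

definition txy :: "(nat \<Rightarrow> real) \<Rightarrow> (nat \<Rightarrow> real) \<Rightarrow> (nat \<Rightarrow> nat \<Rightarrow> real) \<Rightarrow> (nat \<Rightarrow> nat \<Rightarrow> 'a \<Rightarrow> real) \<Rightarrow> (nat \<Rightarrow> nat \<Rightarrow> 'a \<Rightarrow> real) \<Rightarrow> nat \<Rightarrow> 'a \<Rightarrow> real" where
  "txy \<Delta> \<rho> x y Z n \<omega> = mean n (\<lambda>i. clip (- ((\<Delta> n)^2)) ((\<Delta> n)^2) (x n i * y n i \<omega>))
      + sqrt (2 * (\<Delta> n)^4 / ((\<rho> n / 5) * (real n)^2)) * Z n 3 \<omega>"

definition ty2 :: "(nat \<Rightarrow> real) \<Rightarrow> (nat \<Rightarrow> real) \<Rightarrow> (nat \<Rightarrow> nat \<Rightarrow> 'a \<Rightarrow> real) \<Rightarrow> (nat \<Rightarrow> nat \<Rightarrow> 'a \<Rightarrow> real) \<Rightarrow> nat \<Rightarrow> 'a \<Rightarrow> real" where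
  "ty2 \<Delta> \<rho> y Z n \<omega> = mean n (\<lambda>i. clip 0 ((\<Delta> n)^2) ((y n i \<omega>)^2))
      + sqrt ((\<Delta> n)^4 / (2 * (\<rho> n / 5) * (real n)^2)) * Z n 4 \<omega>"

definition tsx :: "(nat \<Rightarrow> real) \<Rightarrow> (nat \<Rightarrow> real) \<Rightarrow> (nat \<Rightarrow> nat \<Rightarrow> real) \<Rightarrow> (nat \<Rightarrow> nat \<Rightarrow> 'a \<Rightarrow> real) \<Rightarrow> nat \<Rightarrow> 'a \<Rightarrow> real" where
  "tsx \<Delta> \<rho> x Z n \<omega> = tx2 \<Delta> \<rho> x Z n \<omega> - (tx \<Delta> \<rho> x Z n \<omega>)^2"

definition Etil :: "(nat \<Rightarrow> real) \<Rightarrow> (nat \<Rightarrow> real) \<Rightarrow> (nat \<Rightarrow> nat \<Rightarrow> real) \<Rightarrow> (nat \<Rightarrow> nat \<Rightarrow> 'a \<Rightarrow> real) \<Rightarrow> nat \<Rightarrow> 'a \<Rightarrow> complex^2^2" where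
  "Etil \<Delta> \<rho> x Z n \<omega> =
     (let a = complex_of_real (tx2 \<Delta> \<rho> x Z n \<omega>);
          m = complex_of_real (tx \<Delta> \<rho> x Z n \<omega>);
          s = csqrt (complex_of_real (tsx \<Delta> \<rho> x Z n \<omega>));
          d = csqrt (a + 1 + 2 * s)
      in vector [vector [(1 + s) / d, m / d], vector [m / d, (a + s) / d]])"

end

theory Submission
  imports Defs
begin

text \<open>
  Outside an event of vanishing probability no observation is clipped, so every released statistic
  is the corresponding sample statistic plus independent Gaussian noise whose standard deviation,
  multiplied by \<open>\<surd>n\<close>, tends to 0 by assumption (3). Hence each private statistic is
  \<open>\<surd>n\<close>-close to its sample counterpart, and the sample statistics converge by the weak law of
  large numbers (Chebyshev's inequality plus Bienayme's identity for the independent Gaussian errors).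
  \<open>\<surd>n\<close>-closeness to a common limit survives sums, products, reciprocals and square roots away
  from 0 (a first-order delta method). The positive definite square root of
  \<open>A = [[1, m], [m, a]]\<close> is \<open>(A + \<surd>det A \<cdot> I) / \<surd>(tr A + 2\<surd>det A)\<close>, built from exactly these
  operations, which gives the claims about \<open>\<tilde>E\<^sub>n\<close>; near the limit \<open>c\<^sub>b > 0\<close> all
  complex square roots in \<open>\<tilde>E\<^sub>n\<close> are real.
\<close>

section \<open>Convergence in outer probability\<close>

text \<open>
  Unlike
  \<^const>\<open>conv_prob\<close>, which gives non-measurable events measure 0, this notion is preserved by
  continuous maps without measurability side conditions, and it implies \<^const>\<open>conv_prob\<close>.
\<close>

definition conv_oprob :: "(nat \<Rightarrow> 'a measure) \<Rightarrow> (nat \<Rightarrow> 'a \<Rightarrow> 'b::metric_space) \<Rightarrow> 'b \<Rightarrow> bool" where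
  "conv_oprob M X c \<longleftrightarrow> (\<forall>e>0. \<forall>d>0. eventually (\<lambda>n. prob_space (M n) \<and>
      (\<exists>B\<in>sets (M n). {\<omega>\<in>space (M n). e < dist (X n \<omega>) c} \<subseteq> B \<and> measure (M n) B < d)) sequentially)"

lemma conv_oprobD:
  "conv_oprob M X c \<Longrightarrow> e > 0 \<Longrightarrow> d > 0 \<Longrightarrow> eventually (\<lambda>n. prob_space (M n) \<and>
      (\<exists>B\<in>sets (M n). {\<omega>\<in>space (M n). e < dist (X n \<omega>) c} \<subseteq> B \<and> measure (M n) B < d)) sequentially"
  unfolding conv_oprob_def by blast

lemma conv_oprob_imp_conv_prob:
  assumes "conv_oprob M X c"
  shows "conv_prob M X c"
  unfolding conv_prob_def
proof (intro allI impI LIMSEQ_I)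
  fix e r :: real assume "e > 0" "r > 0"
  from conv_oprobD[OF assms this] obtain N where N: "\<And>n. n \<ge> N \<Longrightarrow> prob_space (M n) \<and>
      (\<exists>B\<in>sets (M n). {\<omega>\<in>space (M n). e < dist (X n \<omega>) c} \<subseteq> B \<and> measure (M n) B < r)"
    unfolding eventually_sequentially by blast
  have "measure (M n) {\<omega> \<in> space (M n). dist (X n \<omega>) c > e} < r" if "n \<ge> N" for n
  proof -
    obtain B where P: "prob_space (M n)" and B: "B \<in> sets (M n)"
      "{\<omega>\<in>space (M n). e < dist (X n \<omega>) c} \<subseteq> B" "measure (M n) B < r"
      using N[OF \<open>n \<ge> N\<close>] by blast
    interpret prob_space "M n" by (rule P)
    have "measure (M n) {\<omega> \<in> space (M n). dist (X n \<omega>) c > e} \<le> measure (M n) B"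
      using B by (cases "{\<omega>\<in>space (M n). e < dist (X n \<omega>) c} \<in> sets (M n)")
        (auto simp: measure_notin_sets intro: finite_measure_mono)
    then show ?thesis using B by linarith
  qed
  then show "\<exists>N. \<forall>n\<ge>N. norm (measure (M n) {\<omega> \<in> space (M n). dist (X n \<omega>) c > e} - 0) < r"
    by auto
qed

lemma conv_oprob_eventually_prob_space:
  "conv_oprob M X c \<Longrightarrow> eventually (\<lambda>n. prob_space (M n)) sequentially"
  using conv_oprobD[of M X c 1 1] by (auto elim: eventually_mono)

lemma conv_oprob_const:
  assumes "a \<longlonglongrightarrow> c" "eventually (\<lambda>n. prob_space (M n)) sequentially"
  shows "conv_oprob M (\<lambda>n \<omega>. a n) c"
  unfolding conv_oprob_def
proof (intro allI impI)
  fix e d :: real assume "e > 0" "d > 0"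
  show "eventually (\<lambda>n. prob_space (M n) \<and>
      (\<exists>B\<in>sets (M n). {\<omega>\<in>space (M n). e < dist (a n) c} \<subseteq> B \<and> measure (M n) B < d)) sequentially"
    using tendstoD[OF assms(1) \<open>e > 0\<close>] assms(2)
    by eventually_elim (use \<open>d > 0\<close> in \<open>auto intro!: bexI[of _ "{}"]\<close>)
qed

lemma conv_oprob_dominated:
  assumes Y: "conv_oprob M Y d" and T: "conv_oprob M T t" and r: "r > 0"
    and E: "(\<lambda>n. measure (M n) (E n)) \<longlonglongrightarrow> 0"
    and dom: "eventually (\<lambda>n. E n \<in> sets (M n) \<and> (\<forall>\<omega>\<in>space (M n) - E n.
       dist (T n \<omega>) t < r \<longrightarrow> dist (X n \<omega>) c \<le> dist (Y n \<omega>) d)) sequentially"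
  shows "conv_oprob M X c"
  unfolding conv_oprob_def
proof (intro allI impI)
  fix e p :: real assume "e > 0" "p > 0"
  then have "p / 3 > 0" "r / 2 > 0" using r by auto
  show "eventually (\<lambda>n. prob_space (M n) \<and>
      (\<exists>B\<in>sets (M n). {\<omega>\<in>space (M n). e < dist (X n \<omega>) c} \<subseteq> B \<and> measure (M n) B < p)) sequentially"
    using order_tendstoD(2)[OF E \<open>p / 3 > 0\<close>] conv_oprobD[OF Y \<open>e > 0\<close> \<open>p / 3 > 0\<close>]
      conv_oprobD[OF T \<open>r / 2 > 0\<close> \<open>p / 3 > 0\<close>] dom
  proof eventually_elim
    case (elim n)
    then obtain B1 B2 where P: "prob_space (M n)" and En: "E n \<in> sets (M n)"
      and B1: "B1 \<in> sets (M n)" "{\<omega>\<in>space (M n). e < dist (Y n \<omega>) d} \<subseteq> B1" "measure (M n) B1 < p/3"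
      and B2: "B2 \<in> sets (M n)" "{\<omega>\<in>space (M n). r/2 < dist (T n \<omega>) t} \<subseteq> B2" "measure (M n) B2 < p/3"
      by blast
    have "\<omega> \<in> B1 \<union> B2 \<union> E n" if \<omega>: "\<omega> \<in> space (M n)" "e < dist (X n \<omega>) c" for \<omega>
    proof (rule ccontr)
      assume "\<omega> \<notin> B1 \<union> B2 \<union> E n"
      then have "dist (T n \<omega>) t < r" "dist (Y n \<omega>) d \<le> e" "\<omega> \<in> space (M n) - E n"
        using B1(2) B2(2) \<omega>(1) r by (fastforce simp: not_less)+
      then show False using elim \<omega>(2) by fastforce
    qed
    then have "{\<omega>\<in>space (M n). e < dist (X n \<omega>) c} \<subseteq> B1 \<union> B2 \<union> E n" by blast
    moreover have "measure (M n) (B1 \<union> B2 \<union> E n) < p"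
      using measure_Un_le[OF _ En, of "B1 \<union> B2"] measure_Un_le[OF B1(1) B2(1)] B1 B2 En elim by auto
    ultimately show ?case using P B1 B2 En by blast
  qed
qed

lemma conv_oprob_le:
  assumes "conv_oprob M Y d"
    and "eventually (\<lambda>n. \<forall>\<omega>\<in>space (M n). dist (X n \<omega>) c \<le> dist (Y n \<omega>) d) sequentially"
  shows "conv_oprob M X c"
  using assms by (intro conv_oprob_dominated[where E = "\<lambda>n. {}", OF assms(1) assms(1) zero_less_one])
    (auto elim!: eventually_mono)

lemma conv_oprob_cong:
  assumes "conv_oprob M Y c" "eventually (\<lambda>n. \<forall>\<omega>\<in>space (M n). X n \<omega> = Y n \<omega>) sequentially"
  shows "conv_oprob M X c"
  using assms by (intro conv_oprob_le[OF assms(1)]) (auto elim!: eventually_mono)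

lemma conv_oprob_cong_on:
  assumes "conv_oprob M Y c" "conv_oprob M T t" "r > 0"
    and "eventually (\<lambda>n. \<forall>\<omega>\<in>space (M n). dist (T n \<omega>) t < r \<longrightarrow> X n \<omega> = Y n \<omega>) sequentially"
  shows "conv_oprob M X c"
  using assms by (intro conv_oprob_dominated[where E = "\<lambda>n. {}", OF assms(1-3)])
    (auto elim!: eventually_mono)

lemma conv_oprob_cong_off:
  assumes "conv_oprob M Y c" "(\<lambda>n. measure (M n) (E n)) \<longlonglongrightarrow> 0"
    and "eventually (\<lambda>n. E n \<in> sets (M n) \<and> (\<forall>\<omega>\<in>space (M n) - E n. X n \<omega> = Y n \<omega>)) sequentially"
  shows "conv_oprob M X c"
  using assms by (intro conv_oprob_dominated[OF assms(1) assms(1) zero_less_one assms(2)])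
    (auto elim!: eventually_mono)

lemma conv_oprob_continuous2:
  assumes X: "conv_oprob M X a" and Y: "conv_oprob M Y b"
    and f: "isCont (\<lambda>p. f (fst p) (snd p)) (a, b)"
  shows "conv_oprob M (\<lambda>n \<omega>. f (X n \<omega>) (Y n \<omega>)) (f a b)"
  unfolding conv_oprob_def
proof (intro allI impI)
  fix e p :: real assume "e > 0" "p > 0"
  obtain \<delta> where "\<delta> > 0" and \<delta>: "\<And>q. dist q (a, b) < \<delta> \<Longrightarrow> dist (f (fst q) (snd q)) (f a b) < e"
    using f \<open>e > 0\<close> unfolding continuous_at_eps_delta by fastforce
  have "\<delta> / 3 > 0" "p / 2 > 0" using \<open>\<delta> > 0\<close> \<open>p > 0\<close> by auto
  have close: "dist (f u v) (f a b) < e" if "dist u a \<le> \<delta> / 3" "dist v b \<le> \<delta> / 3" for u v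
  proof -
    have "dist (u, v) (a, b) \<le> dist u a + dist v b"
      unfolding dist_Pair_Pair by (rule sqrt_sum_squares_le_sum) auto
    then show ?thesis using \<delta>[of "(u, v)"] that \<open>\<delta> > 0\<close> by simp
  qed
  show "eventually (\<lambda>n. prob_space (M n) \<and> (\<exists>B\<in>sets (M n).
      {\<omega>\<in>space (M n). e < dist (f (X n \<omega>) (Y n \<omega>)) (f a b)} \<subseteq> B \<and> measure (M n) B < p)) sequentially"
    using conv_oprobD[OF X \<open>\<delta> / 3 > 0\<close> \<open>p / 2 > 0\<close>] conv_oprobD[OF Y \<open>\<delta> / 3 > 0\<close> \<open>p / 2 > 0\<close>]
  proof eventually_elim
    case (elim n)
    then obtain B1 B2 where P: "prob_space (M n)"
      and B1: "B1 \<in> sets (M n)" "{\<omega>\<in>space (M n). \<delta>/3 < dist (X n \<omega>) a} \<subseteq> B1" "measure (M n) B1 < p/2"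
      and B2: "B2 \<in> sets (M n)" "{\<omega>\<in>space (M n). \<delta>/3 < dist (Y n \<omega>) b} \<subseteq> B2" "measure (M n) B2 < p/2"
      by blast
    have "{\<omega>\<in>space (M n). e < dist (f (X n \<omega>) (Y n \<omega>)) (f a b)} \<subseteq> B1 \<union> B2"
      using B1(2) B2(2) close by (fastforce simp: not_less)
    moreover have "measure (M n) (B1 \<union> B2) < p"
      using measure_Un_le[OF B1(1) B2(1)] B1 B2 by auto
    ultimately show ?case using P B1 B2 by blast
  qed
qed

lemma conv_oprob_continuous:
  assumes "conv_oprob M X a" "isCont f a"
  shows "conv_oprob M (\<lambda>n \<omega>. f (X n \<omega>)) (f a)"
proof -
  have "isCont (\<lambda>p. f (fst p)) (a, a)"
    using isCont_o2[OF isCont_fst[OF continuous_ident], where g = f and a = "(a, a)"] assms(2) by simp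
  then show ?thesis using conv_oprob_continuous2[OF assms(1) assms(1), of "\<lambda>u v. f u"] by simp
qed

lemma
  fixes X Y :: "nat \<Rightarrow> 'a \<Rightarrow> 'b::real_normed_vector"
  assumes X: "conv_oprob M X a" and Y: "conv_oprob M Y b"
  shows conv_oprob_add: "conv_oprob M (\<lambda>n \<omega>. X n \<omega> + Y n \<omega>) (a + b)"
    and conv_oprob_diff: "conv_oprob M (\<lambda>n \<omega>. X n \<omega> - Y n \<omega>) (a - b)"
  by (rule conv_oprob_continuous2[OF X Y], intro continuous_intros)+

lemma conv_oprob_mult:
  fixes X Y :: "nat \<Rightarrow> 'a \<Rightarrow> 'b::real_normed_algebra"
  assumes X: "conv_oprob M X a" and Y: "conv_oprob M Y b"
  shows "conv_oprob M (\<lambda>n \<omega>. X n \<omega> * Y n \<omega>) (a * b)"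
  by (rule conv_oprob_continuous2[OF X Y]) (intro continuous_intros)

lemma conv_oprob_pair:
  "conv_oprob M X a \<Longrightarrow> conv_oprob M Y b \<Longrightarrow> conv_oprob M (\<lambda>n \<omega>. (X n \<omega>, Y n \<omega>)) (a, b)"
  by (rule conv_oprob_continuous2[where f = Pair]) simp_all

lemma conv_oprob_sum:
  fixes X :: "'i \<Rightarrow> nat \<Rightarrow> 'a \<Rightarrow> 'b::real_normed_vector"
  assumes "finite I" "eventually (\<lambda>n. prob_space (M n)) sequentially"
    and "\<And>i. i \<in> I \<Longrightarrow> conv_oprob M (X i) (c i)"
  shows "conv_oprob M (\<lambda>n \<omega>. \<Sum>i\<in>I. X i n \<omega>) (\<Sum>i\<in>I. c i)"
  using assms by (induction I rule: finite_induct) (auto intro: conv_oprob_const conv_oprob_add)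

lemma conv_oprob_vec:
  fixes X :: "nat \<Rightarrow> 'a \<Rightarrow> 'b::real_normed_vector^'n"
  assumes P: "eventually (\<lambda>n. prob_space (M n)) sequentially"
    and X: "\<And>i. conv_oprob M (\<lambda>n \<omega>. X n \<omega> $ i) (c $ i)"
  shows "conv_oprob M X c"
proof (rule conv_oprob_le)
  have "conv_oprob M (\<lambda>n \<omega>. dist (X n \<omega> $ i) (c $ i)) (dist (c $ i) (c $ i))" for i
    by (rule conv_oprob_continuous[OF X]) (intro continuous_intros)
  then show "conv_oprob M (\<lambda>n \<omega>. \<Sum>i\<in>UNIV. dist (X n \<omega> $ i) (c $ i)) 0"
    using conv_oprob_sum[OF finite P, where X = "\<lambda>i n \<omega>. dist (X n \<omega> $ i) (c $ i)" and c = "\<lambda>_. 0"] by simp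
  show "eventually (\<lambda>n. \<forall>\<omega>\<in>space (M n).
      dist (X n \<omega>) c \<le> dist (\<Sum>i\<in>UNIV. dist (X n \<omega> $ i) (c $ i)) 0) sequentially"
    unfolding dist_vec_def by (auto intro!: always_eventually L2_set_le_sum simp: sum_nonneg)
qed

lemma conv_oprob_tail_bound:
  assumes tail: "\<And>t. t > 0 \<Longrightarrow> eventually (\<lambda>n. prob_space (M n) \<and>
      {\<omega>\<in>space (M n). t \<le> dist (X n \<omega>) c} \<in> sets (M n) \<and>
      measure (M n) {\<omega>\<in>space (M n). t \<le> dist (X n \<omega>) c} \<le> b n t) sequentially"
    and b: "\<And>t. t > 0 \<Longrightarrow> (\<lambda>n. b n t) \<longlonglongrightarrow> 0"
  shows "conv_oprob M X c"
  unfolding conv_oprob_def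
proof (intro allI impI)
  fix e d :: real assume "e > 0" "d > 0"
  show "eventually (\<lambda>n. prob_space (M n) \<and>
      (\<exists>B\<in>sets (M n). {\<omega>\<in>space (M n). e < dist (X n \<omega>) c} \<subseteq> B \<and> measure (M n) B < d)) sequentially"
    using tail[OF \<open>e > 0\<close>] order_tendstoD(2)[OF b[OF \<open>e > 0\<close>] \<open>d > 0\<close>]
    by eventually_elim (auto intro!: bexI[of _ "{\<omega>\<in>space _. e \<le> dist (X _ \<omega>) c}"])
qed

lemma conv_oprob_zero_of_root_n:
  fixes X :: "nat \<Rightarrow> 'a \<Rightarrow> real"
  assumes "conv_oprob M (\<lambda>n \<omega>. sqrt (real n) * X n \<omega>) 0"
  shows "conv_oprob M X 0"
proof (rule conv_oprob_le[OF assms])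
  have le: "\<bar>X n \<omega>\<bar> \<le> sqrt (real n) * \<bar>X n \<omega>\<bar>" if "n \<ge> 1" for n \<omega>
    using mult_right_mono[of 1 "sqrt (real n)" "\<bar>X n \<omega>\<bar>"] that by simp
  show "eventually (\<lambda>n. \<forall>\<omega>\<in>space (M n). dist (X n \<omega>) 0 \<le> dist (sqrt (real n) * X n \<omega>) 0) sequentially"
    using eventually_ge_at_top[of "1::nat"] by eventually_elim (simp add: abs_mult le)
qed

section \<open>Root-n closeness\<close>

definition root_n_close :: "(nat \<Rightarrow> 'a measure) \<Rightarrow> (nat \<Rightarrow> 'a \<Rightarrow> real) \<Rightarrow> (nat \<Rightarrow> 'a \<Rightarrow> real) \<Rightarrow> bool" where
  "root_n_close M A B \<longleftrightarrow> conv_oprob M (\<lambda>n \<omega>. sqrt (real n) * (A n \<omega> - B n \<omega>)) 0"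

definition root_n_close_to ::
  "(nat \<Rightarrow> 'a measure) \<Rightarrow> (nat \<Rightarrow> 'a \<Rightarrow> real) \<Rightarrow> (nat \<Rightarrow> 'a \<Rightarrow> real) \<Rightarrow> real \<Rightarrow> bool" where
  "root_n_close_to M A B a \<longleftrightarrow> root_n_close M A B \<and> conv_oprob M A a \<and> conv_oprob M B a"

lemma root_n_close_toD:
  "root_n_close_to M A B a \<Longrightarrow> root_n_close M A B"
  "root_n_close_to M A B a \<Longrightarrow> conv_oprob M A a"
  "root_n_close_to M A B a \<Longrightarrow> conv_oprob M B a"
  unfolding root_n_close_to_def by blast+

lemma root_n_close_abs:
  "root_n_close M A B \<Longrightarrow> conv_oprob M (\<lambda>n \<omega>. sqrt (real n) * \<bar>A n \<omega> - B n \<omega>\<bar>) 0"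
  unfolding root_n_close_def by (erule conv_oprob_le) (simp add: abs_mult)

lemma root_n_close_toI:
  assumes close: "root_n_close M A B" and B: "conv_oprob M B a"
  shows "root_n_close_to M A B a"
proof -
  have "conv_oprob M (\<lambda>n \<omega>. A n \<omega> - B n \<omega>) 0"
    using close unfolding root_n_close_def by (rule conv_oprob_zero_of_root_n)
  from conv_oprob_add[OF this B] have "conv_oprob M A a" by simp
  with close B show ?thesis unfolding root_n_close_to_def by blast
qed

lemma root_n_close_to_const:
  "eventually (\<lambda>n. prob_space (M n)) sequentially \<Longrightarrow> root_n_close_to M (\<lambda>n \<omega>. k) (\<lambda>n \<omega>. k) k"
  unfolding root_n_close_to_def root_n_close_def
  using conv_oprob_const[of "\<lambda>_. k" k M] conv_oprob_const[of "\<lambda>_. 0" 0 M] by simp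

context
  fixes M :: "nat \<Rightarrow> 'a measure" and A B C D :: "nat \<Rightarrow> 'a \<Rightarrow> real" and a c :: real
  assumes AB: "root_n_close_to M A B a" and CD: "root_n_close_to M C D c"
begin

lemma root_n_close_to_add: "root_n_close_to M (\<lambda>n \<omega>. A n \<omega> + C n \<omega>) (\<lambda>n \<omega>. B n \<omega> + D n \<omega>) (a + c)"
proof (rule root_n_close_toI)
  have "conv_oprob M (\<lambda>n \<omega>. sqrt (real n) * (A n \<omega> - B n \<omega>) + sqrt (real n) * (C n \<omega> - D n \<omega>)) (0 + 0)"
    using AB CD unfolding root_n_close_to_def root_n_close_def by (intro conv_oprob_add) auto
  then show "root_n_close M (\<lambda>n \<omega>. A n \<omega> + C n \<omega>) (\<lambda>n \<omega>. B n \<omega> + D n \<omega>)"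
    unfolding root_n_close_def by (simp add: algebra_simps)
  show "conv_oprob M (\<lambda>n \<omega>. B n \<omega> + D n \<omega>) (a + c)"
    using AB CD unfolding root_n_close_to_def by (intro conv_oprob_add) auto
qed

lemma root_n_close_to_diff: "root_n_close_to M (\<lambda>n \<omega>. A n \<omega> - C n \<omega>) (\<lambda>n \<omega>. B n \<omega> - D n \<omega>) (a - c)"
proof (rule root_n_close_toI)
  have "conv_oprob M (\<lambda>n \<omega>. sqrt (real n) * (A n \<omega> - B n \<omega>) - sqrt (real n) * (C n \<omega> - D n \<omega>)) (0 - 0)"
    using AB CD unfolding root_n_close_to_def root_n_close_def by (intro conv_oprob_diff) auto
  then show "root_n_close M (\<lambda>n \<omega>. A n \<omega> - C n \<omega>) (\<lambda>n \<omega>. B n \<omega> - D n \<omega>)"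
    unfolding root_n_close_def by (simp add: algebra_simps)
  show "conv_oprob M (\<lambda>n \<omega>. B n \<omega> - D n \<omega>) (a - c)"
    using AB CD unfolding root_n_close_to_def by (intro conv_oprob_diff) auto
qed

lemma root_n_close_to_mult: "root_n_close_to M (\<lambda>n \<omega>. A n \<omega> * C n \<omega>) (\<lambda>n \<omega>. B n \<omega> * D n \<omega>) (a * c)"
proof (rule root_n_close_toI)
  have "conv_oprob M (\<lambda>n \<omega>. sqrt (real n) * (A n \<omega> - B n \<omega>)) 0" "conv_oprob M C c"
    "conv_oprob M B a" "conv_oprob M (\<lambda>n \<omega>. sqrt (real n) * (C n \<omega> - D n \<omega>)) 0"
    using AB CD unfolding root_n_close_to_def root_n_close_def by auto
  from conv_oprob_add[OF conv_oprob_mult[OF this(1,2)] conv_oprob_mult[OF this(3,4)]]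
  show "root_n_close M (\<lambda>n \<omega>. A n \<omega> * C n \<omega>) (\<lambda>n \<omega>. B n \<omega> * D n \<omega>)"
    unfolding root_n_close_def by (simp add: algebra_simps)
  show "conv_oprob M (\<lambda>n \<omega>. B n \<omega> * D n \<omega>) (a * c)"
    using AB CD unfolding root_n_close_to_def by (intro conv_oprob_mult) auto
qed

end

lemma root_n_close_to_compose:
  assumes AB: "root_n_close_to M A B a" and "r > 0"
    and quot: "\<And>u v. dist u a < r \<Longrightarrow> dist v a < r \<Longrightarrow> f u - f v = (u - v) * q u v"
    and q: "isCont (\<lambda>p. q (fst p) (snd p)) (a, a)" and f: "isCont f a"
  shows "root_n_close_to M (\<lambda>n \<omega>. f (A n \<omega>)) (\<lambda>n \<omega>. f (B n \<omega>)) (f a)"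
proof (rule root_n_close_toI)
  have A: "conv_oprob M A a" and B: "conv_oprob M B a"
    and close: "conv_oprob M (\<lambda>n \<omega>. sqrt (real n) * (A n \<omega> - B n \<omega>)) 0"
    using AB unfolding root_n_close_to_def root_n_close_def by auto
  have "conv_oprob M (\<lambda>n \<omega>. sqrt (real n) * (A n \<omega> - B n \<omega>) * q (A n \<omega>) (B n \<omega>)) (0 * q a a)"
    by (intro conv_oprob_mult close conv_oprob_continuous2[OF A B q])
  then have lin: "conv_oprob M (\<lambda>n \<omega>. sqrt (real n) * (A n \<omega> - B n \<omega>) * q (A n \<omega>) (B n \<omega>)) 0"
    by simp
  show "root_n_close M (\<lambda>n \<omega>. f (A n \<omega>)) (\<lambda>n \<omega>. f (B n \<omega>))"
    unfolding root_n_close_def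
  proof (rule conv_oprob_cong_on[OF lin conv_oprob_pair[OF A B] \<open>r > 0\<close>])
    have "dist u a < r \<and> dist v a < r" if "dist (u, v) (a, a) < r" for u v
      using that dist_fst_le[of "(u, v)" "(a, a)"] dist_snd_le[of "(u, v)" "(a, a)"] by auto
    then show "eventually (\<lambda>n. \<forall>\<omega>\<in>space (M n). dist (A n \<omega>, B n \<omega>) (a, a) < r \<longrightarrow>
        sqrt (real n) * (f (A n \<omega>) - f (B n \<omega>)) =
        sqrt (real n) * (A n \<omega> - B n \<omega>) * q (A n \<omega>) (B n \<omega>)) sequentially"
      using quot by (auto intro!: always_eventually)
  qed
  show "conv_oprob M (\<lambda>n \<omega>. f (B n \<omega>)) (f a)"
    using B f by (rule conv_oprob_continuous)
qed

lemma root_n_close_to_inverse: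
  assumes "root_n_close_to M A B a" "a \<noteq> 0"
  shows "root_n_close_to M (\<lambda>n \<omega>. 1 / A n \<omega>) (\<lambda>n \<omega>. 1 / B n \<omega>) (1 / a)"
proof (rule root_n_close_to_compose[OF assms(1), of "\<bar>a\<bar> / 2"])
  show "1 / u - 1 / v = (u - v) * (- 1 / (u * v))" if "dist u a < \<bar>a\<bar> / 2" "dist v a < \<bar>a\<bar> / 2" for u v
  proof -
    have "u \<noteq> 0" "v \<noteq> 0" using that by (auto simp: dist_real_def)
    then show ?thesis by (simp add: field_simps)
  qed
  show "isCont (\<lambda>p. - 1 / (fst p * snd p)) (a, a)" "isCont (\<lambda>u. 1 / u) a"
    using assms(2) by (intro continuous_intros; simp)+
  show "\<bar>a\<bar> / 2 > 0" using assms(2) by simp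
qed

lemma root_n_close_to_sqrt:
  assumes "root_n_close_to M A B a" "a > 0"
  shows "root_n_close_to M (\<lambda>n \<omega>. sqrt (A n \<omega>)) (\<lambda>n \<omega>. sqrt (B n \<omega>)) (sqrt a)"
proof (rule root_n_close_to_compose[OF assms(1), of "a / 2"])
  show "sqrt u - sqrt v = (u - v) * (1 / (sqrt u + sqrt v))" if "dist u a < a / 2" "dist v a < a / 2" for u v
  proof -
    have "u > 0" "v > 0" using that unfolding dist_real_def by linarith+
    then have "(sqrt u - sqrt v) * (sqrt u + sqrt v) = u - v" "sqrt u + sqrt v > 0"
      by (simp_all add: algebra_simps add_pos_pos)
    then show ?thesis by (simp add: field_simps)
  qed
  show "isCont (\<lambda>p. 1 / (sqrt (fst p) + sqrt (snd p))) (a, a)" "isCont sqrt a"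
    using assms(2) by (intro continuous_intros; simp add: add_pos_pos)+
  show "a / 2 > 0" using assms(2) by simp
qed

section \<open>Sums of independent Gaussian variables\<close>

lemma (in prob_space) indep_vars_reindex:
  assumes f: "inj_on f I" and ind: "indep_vars M' X (f ` I)"
  shows "indep_vars (\<lambda>i. M' (f i)) (\<lambda>i. X (f i)) I"
proof -
  let ?F = "\<lambda>k. {X k -` A \<inter> space M | A. A \<in> sets (M' k)}"
  have rv: "\<forall>k\<in>f ` I. random_variable (M' k) (X k) \<and> ?F k \<subseteq> events"
    and mult: "\<And>J A. J \<subseteq> f ` I \<Longrightarrow> J \<noteq> {} \<Longrightarrow> finite J \<Longrightarrow> A \<in> Pi J ?F \<Longrightarrow>
      prob (\<Inter>j\<in>J. A j) = (\<Prod>j\<in>J. prob (A j))"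
    using ind unfolding indep_vars_def2 indep_sets_def by blast+
  have "prob (\<Inter>j\<in>J. A j) = (\<Prod>j\<in>J. prob (A j))"
    if J: "J \<subseteq> I" "J \<noteq> {}" "finite J" and A: "A \<in> Pi J (\<lambda>i. ?F (f i))" for J A
  proof -
    define g where "g = the_inv_into I f"
    have g: "g (f i) = i" if "i \<in> J" for i
      unfolding g_def using that J f by (auto intro: the_inv_into_f_f)
    have inj: "inj_on f J" using f J by (auto intro: inj_on_subset)
    have "prob (\<Inter>k\<in>f ` J. A (g k)) = (\<Prod>k\<in>f ` J. prob (A (g k)))"
      using J A g by (intro mult) (auto simp: Pi_iff)
    then show ?thesis
      using g by (simp add: prod.reindex[OF inj] cong: INF_cong)
  qed
  then show ?thesis
    using rv unfolding indep_vars_def2 indep_sets_def by auto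
qed

lemma (in prob_space) std_normal_distributed:
  assumes D: "distributed M lborel W std_normal_density"
  shows std_normal_random_variable: "random_variable borel W"
    and std_normal_integrable_power: "integrable M (\<lambda>\<omega>. W \<omega> ^ k)"
    and std_normal_second_moment: "expectation (\<lambda>\<omega>. (W \<omega>)\<^sup>2) = 1"
    and std_normal_fourth_moment: "expectation (\<lambda>\<omega>. W \<omega> ^ 4) = 3"
proof -
  show "random_variable borel W" using distributed_measurable[OF D] by simp
  show "integrable M (\<lambda>\<omega>. W \<omega> ^ k)"
    using distributed_integrable[OF D, of "\<lambda>x. x ^ k"] integrable_std_normal_moment[of k] by simp
  have "expectation (\<lambda>\<omega>. W \<omega> ^ (2 * m)) = fact (2 * m) / (2 ^ m * fact m)" for m
    using distributed_integral[OF D, of "\<lambda>x. x ^ (2 * m)"] integral_std_normal_moment_even[of m] by simp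
  from this[of 1] this[of 2] show "expectation (\<lambda>\<omega>. (W \<omega>)\<^sup>2) = 1" "expectation (\<lambda>\<omega>. W \<omega> ^ 4) = 3"
    by (simp_all add: fact_numeral)
qed

lemma conv_oprob_scaled_std_normal:
  assumes W: "eventually (\<lambda>n. prob_space (M n) \<and>
      distributed (M n) lborel (W n) std_normal_density) sequentially"
    and k: "k \<longlonglongrightarrow> 0"
  shows "conv_oprob M (\<lambda>n \<omega>. k n * W n \<omega>) 0"
proof (rule conv_oprob_tail_bound[where b = "\<lambda>n t. (k n)\<^sup>2 / t\<^sup>2"])
  fix t :: real assume "t > 0"
  show "(\<lambda>n. (k n)\<^sup>2 / t\<^sup>2) \<longlonglongrightarrow> 0"
    using tendsto_divide[OF tendsto_power[OF k, of 2] tendsto_const[of "t\<^sup>2"]] \<open>t > 0\<close> by simp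
  show "eventually (\<lambda>n. prob_space (M n) \<and> {\<omega>\<in>space (M n). t \<le> dist (k n * W n \<omega>) 0} \<in> sets (M n) \<and>
      measure (M n) {\<omega>\<in>space (M n). t \<le> dist (k n * W n \<omega>) 0} \<le> (k n)\<^sup>2 / t\<^sup>2) sequentially"
    using W
  proof eventually_elim
    case (elim n)
    then interpret prob_space "M n" by simp
    have D: "distributed (M n) lborel (W n) std_normal_density" using elim by simp
    note [measurable] = std_normal_random_variable[OF D]
    have "measure (M n) {\<omega>\<in>space (M n). t \<le> dist (k n * W n \<omega>) 0} \<le> (k n)\<^sup>2 / t\<^sup>2"
    proof (cases "k n = 0")
      case False
      then have "{\<omega>\<in>space (M n). t \<le> dist (k n * W n \<omega>) 0} =
          {\<omega>\<in>space (M n). t / \<bar>k n\<bar> \<le> \<bar>W n \<omega> - expectation (W n)\<bar>}"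
        by (auto simp: standard_normal_distributed_expectation[OF D] abs_mult field_simps)
      also have "prob \<dots> \<le> variance (W n) / (t / \<bar>k n\<bar>)\<^sup>2"
        using std_normal_integrable_power[OF D, of 2] False \<open>t > 0\<close> by (intro Chebyshev_inequality) auto
      finally show ?thesis
        using standard_normal_distributed_variance[OF D] by (simp add: power_divide)
    qed (use \<open>t > 0\<close> in simp)
    moreover have "{\<omega>\<in>space (M n). t \<le> dist (k n * W n \<omega>) 0} \<in> sets (M n)" by measurable
    ultimately show ?case using elim by simp
  qed
qed

lemma (in prob_space) variance_sum_indep:
  fixes X :: "'i \<Rightarrow> 'a \<Rightarrow> real"
  assumes I: "finite I" and ind: "indep_vars (\<lambda>_. borel) X I"
    and sq: "\<And>i. i \<in> I \<Longrightarrow> integrable M (\<lambda>\<omega>. (X i \<omega>)\<^sup>2)"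
  shows "integrable M (\<lambda>\<omega>. (\<Sum>i\<in>I. X i \<omega>)\<^sup>2)"
    and "variance (\<lambda>\<omega>. \<Sum>i\<in>I. X i \<omega>) = (\<Sum>i\<in>I. variance (X i))"
proof -
  have rv: "\<And>i. i \<in> I \<Longrightarrow> random_variable borel (X i)"
    using ind unfolding indep_vars_def by blast
  have int: "\<And>i. i \<in> I \<Longrightarrow> integrable M (X i)"
    using sq rv square_integrable_imp_integrable by blast
  define Y where "Y i \<omega> = X i \<omega> - expectation (X i)" for i \<omega>
  have indY: "indep_vars (\<lambda>_. borel) Y I"
    unfolding Y_def by (rule indep_vars_compose2[OF ind]) auto
  have intY: "\<And>i. i \<in> I \<Longrightarrow> integrable M (Y i)" and EY: "\<And>i. i \<in> I \<Longrightarrow> expectation (Y i) = 0"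
    unfolding Y_def using int by (auto simp: prob_space)
  have YY: "integrable M (\<lambda>\<omega>. Y i \<omega> * Y j \<omega>) \<and>
      expectation (\<lambda>\<omega>. Y i \<omega> * Y j \<omega>) = (if i = j then variance (X i) else 0)"
    if ij: "i \<in> I" "j \<in> I" for i j
  proof (cases "i = j")
    case True
    have "(\<lambda>\<omega>. Y i \<omega> * Y i \<omega>) = (\<lambda>\<omega>. (X i \<omega>)\<^sup>2 - 2 * expectation (X i) * X i \<omega> + (expectation (X i))\<^sup>2)"
      unfolding Y_def by (auto simp: power2_eq_square algebra_simps)
    then show ?thesis using True sq[OF ij(1)] int[OF ij(1)] by (simp add: Y_def power2_eq_square)
  next
    case False
    have "indep_vars (\<lambda>_. borel) Y {i, j}" by (rule indep_vars_subset[OF indY]) (use ij in auto)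
    then have "integrable M (\<lambda>\<omega>. \<Prod>k\<in>{i, j}. Y k \<omega>) \<and>
        expectation (\<lambda>\<omega>. \<Prod>k\<in>{i, j}. Y k \<omega>) = (\<Prod>k\<in>{i, j}. expectation (Y k))"
      using intY ij by (auto intro!: indep_vars_integrable indep_vars_lebesgue_integral)
    then show ?thesis using False EY ij by simp
  qed
  have sum_sq: "(\<Sum>i\<in>I. Y i \<omega>)\<^sup>2 = (\<Sum>i\<in>I. \<Sum>j\<in>I. Y i \<omega> * Y j \<omega>)" for \<omega>
    unfolding power2_eq_square sum_product ..
  have intS: "integrable M (\<lambda>\<omega>. (\<Sum>i\<in>I. Y i \<omega>)\<^sup>2)"
    unfolding sum_sq using YY by auto
  have centered: "(\<Sum>i\<in>I. X i \<omega>) - expectation (\<lambda>\<omega>. \<Sum>i\<in>I. X i \<omega>) = (\<Sum>i\<in>I. Y i \<omega>)" for \<omega>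
    using int unfolding Y_def by (simp add: sum_subtractf)
  have "variance (\<lambda>\<omega>. \<Sum>i\<in>I. X i \<omega>) = (\<Sum>i\<in>I. \<Sum>j\<in>I. expectation (\<lambda>\<omega>. Y i \<omega> * Y j \<omega>))"
    unfolding centered sum_sq using YY by (simp add: Bochner_Integration.integral_sum)
  also have "\<dots> = (\<Sum>i\<in>I. \<Sum>j\<in>I. if i = j then variance (X i) else 0)"
    using YY by (intro sum.cong) auto
  also have "\<dots> = (\<Sum>i\<in>I. variance (X i))"
    using I by simp
  finally show "variance (\<lambda>\<omega>. \<Sum>i\<in>I. X i \<omega>) = (\<Sum>i\<in>I. variance (X i))" .
  have "(\<lambda>\<omega>. (\<Sum>i\<in>I. X i \<omega>)\<^sup>2) = (\<lambda>\<omega>. ((\<Sum>i\<in>I. Y i \<omega>) + (\<Sum>i\<in>I. expectation (X i)))\<^sup>2)"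
    unfolding Y_def by (simp add: sum_subtractf)
  then show "integrable M (\<lambda>\<omega>. (\<Sum>i\<in>I. X i \<omega>)\<^sup>2)"
    using intS intY by (simp add: power2_sum)
qed

lemma (in prob_space) Chebyshev_inequality_indep_sum:
  fixes X :: "'i \<Rightarrow> 'a \<Rightarrow> real"
  assumes I: "finite I" and ind: "indep_vars (\<lambda>_. borel) X I"
    and sq: "\<And>i. i \<in> I \<Longrightarrow> integrable M (\<lambda>\<omega>. (X i \<omega>)\<^sup>2)" and "t > 0"
  shows "prob {\<omega>\<in>space M. t \<le> \<bar>(\<Sum>i\<in>I. X i \<omega>) - (\<Sum>i\<in>I. expectation (X i))\<bar>}
           \<le> (\<Sum>i\<in>I. variance (X i)) / t\<^sup>2"
proof -
  have rv: "\<And>i. i \<in> I \<Longrightarrow> random_variable borel (X i)"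
    using ind unfolding indep_vars_def by blast
  have "expectation (\<lambda>\<omega>. \<Sum>i\<in>I. X i \<omega>) = (\<Sum>i\<in>I. expectation (X i))"
    using sq rv square_integrable_imp_integrable by (intro Bochner_Integration.integral_sum) blast
  moreover have "prob {\<omega>\<in>space M. t \<le> \<bar>(\<Sum>i\<in>I. X i \<omega>) - expectation (\<lambda>\<omega>. \<Sum>i\<in>I. X i \<omega>)\<bar>}
      \<le> variance (\<lambda>\<omega>. \<Sum>i\<in>I. X i \<omega>) / t\<^sup>2"
    using rv variance_sum_indep(1)[OF I ind sq] \<open>t > 0\<close> by (intro Chebyshev_inequality) auto
  ultimately show ?thesis using variance_sum_indep(2)[OF I ind sq] by simp
qed

definition indep_std_normal :: "'a measure \<Rightarrow> (nat \<Rightarrow> 'a \<Rightarrow> real) \<Rightarrow> nat \<Rightarrow> bool" where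
  "indep_std_normal M W n \<longleftrightarrow> prob_space M \<and> prob_space.indep_vars M (\<lambda>_. borel) W {..<n} \<and>
     (\<forall>i<n. distributed M lborel (W i) std_normal_density)"

context
  fixes M :: "'a measure" and W :: "nat \<Rightarrow> 'a \<Rightarrow> real" and n :: nat
  assumes W: "indep_std_normal M W n"
begin

interpretation prob_space M
  using W unfolding indep_std_normal_def by blast

lemma indep_std_normal_measurable [measurable]: "i < n \<Longrightarrow> W i \<in> borel_measurable M"
  using W std_normal_random_variable unfolding indep_std_normal_def by simp

lemma indep_std_normal_weighted_sum_tail:
  assumes "t > 0"
  shows "measure M {\<omega>\<in>space M. t \<le> \<bar>\<Sum>i<n. c i * W i \<omega>\<bar>} \<le> (\<Sum>i<n. (c i)\<^sup>2) / t\<^sup>2"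
proof -
  have D: "\<And>i. i < n \<Longrightarrow> distributed M lborel (W i) std_normal_density"
    and ind: "indep_vars (\<lambda>_. borel) (\<lambda>i \<omega>. c i * W i \<omega>) {..<n}"
    using W unfolding indep_std_normal_def by (auto intro: indep_vars_compose2[where X = W])
  have E: "expectation (\<lambda>\<omega>. c i * W i \<omega>) = 0" and V: "variance (\<lambda>\<omega>. c i * W i \<omega>) = (c i)\<^sup>2"
    and sq: "integrable M (\<lambda>\<omega>. (c i * W i \<omega>)\<^sup>2)" if "i < n" for i
    using standard_normal_distributed_expectation[OF D] std_normal_second_moment[OF D]
      std_normal_integrable_power[OF D, of _ 2] that by (simp_all add: power_mult_distrib)
  have sums: "(\<Sum>i<n. expectation (\<lambda>\<omega>. c i * W i \<omega>)) = (\<Sum>i<n. 0)"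
    "(\<Sum>i<n. variance (\<lambda>\<omega>. c i * W i \<omega>)) = (\<Sum>i<n. (c i)\<^sup>2)"
    by (rule sum.cong[OF refl], rule E V, simp)+
  show ?thesis
    using Chebyshev_inequality_indep_sum[OF finite_lessThan ind sq assms] unfolding sums by simp
qed

lemma indep_std_normal_sum_squares_tail:
  assumes "t > 0"
  shows "measure M {\<omega>\<in>space M. t \<le> \<bar>(\<Sum>i<n. (W i \<omega>)\<^sup>2) - real n\<bar>} \<le> 2 * real n / t\<^sup>2"
proof -
  have D: "\<And>i. i < n \<Longrightarrow> distributed M lborel (W i) std_normal_density"
    and ind: "indep_vars (\<lambda>_. borel) (\<lambda>i \<omega>. (W i \<omega>)\<^sup>2) {..<n}"
    using W unfolding indep_std_normal_def by (auto intro: indep_vars_compose2[where X = W])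
  have E: "expectation (\<lambda>\<omega>. (W i \<omega>)\<^sup>2) = 1" and V: "variance (\<lambda>\<omega>. (W i \<omega>)\<^sup>2) = 2"
    and sq: "integrable M (\<lambda>\<omega>. ((W i \<omega>)\<^sup>2)\<^sup>2)" if "i < n" for i
  proof -
    note moments = std_normal_second_moment[OF D[OF that]] std_normal_fourth_moment[OF D[OF that]]
      std_normal_integrable_power[OF D[OF that]]
    show "expectation (\<lambda>\<omega>. (W i \<omega>)\<^sup>2) = 1" by (fact moments)
    have "(\<lambda>\<omega>. ((W i \<omega>)\<^sup>2 - 1)\<^sup>2) = (\<lambda>\<omega>. W i \<omega> ^ 4 - 2 * (W i \<omega>)\<^sup>2 + 1)"
      by (auto simp: power2_eq_square power4_eq_xxxx algebra_simps)
    then show "variance (\<lambda>\<omega>. (W i \<omega>)\<^sup>2) = 2"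
      using moments by (simp add: prob_space)
    show "integrable M (\<lambda>\<omega>. ((W i \<omega>)\<^sup>2)\<^sup>2)"
      using moments(3)[of 4] by (simp flip: power_mult)
  qed
  have sums: "(\<Sum>i<n. expectation (\<lambda>\<omega>. (W i \<omega>)\<^sup>2)) = (\<Sum>i<n. 1)"
    "(\<Sum>i<n. variance (\<lambda>\<omega>. (W i \<omega>)\<^sup>2)) = (\<Sum>i<n. 2)"
    by (rule sum.cong[OF refl], rule E V, simp)+
  show ?thesis
    using Chebyshev_inequality_indep_sum[OF finite_lessThan ind sq assms] unfolding sums
    by (simp add: mult.commute)
qed

end

lemma conv_oprob_mean_weighted_std_normal:
  assumes W: "eventually (\<lambda>n. indep_std_normal (M n) (W n) n) sequentially"
    and c: "(\<lambda>n. mean n (\<lambda>i. (c n i)\<^sup>2)) \<longlonglongrightarrow> L"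
  shows "conv_oprob M (\<lambda>n \<omega>. mean n (\<lambda>i. c n i * W n i \<omega>)) 0"
proof (rule conv_oprob_tail_bound[where b = "\<lambda>n t. mean n (\<lambda>i. (c n i)\<^sup>2) / t\<^sup>2 * (1 / real n)"])
  fix t :: real assume "t > 0"
  show "(\<lambda>n. mean n (\<lambda>i. (c n i)\<^sup>2) / t\<^sup>2 * (1 / real n)) \<longlonglongrightarrow> 0"
    using tendsto_mult[OF tendsto_divide[OF c tendsto_const] lim_1_over_n] \<open>t > 0\<close> by simp
  show "eventually (\<lambda>n. prob_space (M n) \<and>
      {\<omega>\<in>space (M n). t \<le> dist (mean n (\<lambda>i. c n i * W n i \<omega>)) 0} \<in> sets (M n) \<and>
      measure (M n) {\<omega>\<in>space (M n). t \<le> dist (mean n (\<lambda>i. c n i * W n i \<omega>)) 0}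
        \<le> mean n (\<lambda>i. (c n i)\<^sup>2) / t\<^sup>2 * (1 / real n)) sequentially"
    using W eventually_gt_at_top[of 0]
  proof eventually_elim
    case (elim n)
    have [measurable]: "(\<lambda>\<omega>. \<Sum>i<n. c n i * W n i \<omega>) \<in> borel_measurable (M n)"
      using indep_std_normal_measurable[OF elim(1)] by (intro borel_measurable_sum) auto
    have set_eq: "{\<omega>\<in>space (M n). t \<le> dist (mean n (\<lambda>i. c n i * W n i \<omega>)) 0} =
        {\<omega>\<in>space (M n). real n * t \<le> \<bar>\<Sum>i<n. c n i * W n i \<omega>\<bar>}"
      using elim(2) by (simp add: mean_def dist_real_def pos_le_divide_eq mult.commute)
    have "measure (M n) {\<omega>\<in>space (M n). real n * t \<le> \<bar>\<Sum>i<n. c n i * W n i \<omega>\<bar>}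
        \<le> (\<Sum>i<n. (c n i)\<^sup>2) / (real n * t)\<^sup>2"
      using elim \<open>t > 0\<close> by (intro indep_std_normal_weighted_sum_tail) auto
    also have "\<dots> = mean n (\<lambda>i. (c n i)\<^sup>2) / t\<^sup>2 * (1 / real n)"
      using elim(2) by (simp add: mean_def field_simps power2_eq_square)
    finally have "measure (M n) {\<omega>\<in>space (M n). real n * t \<le> \<bar>\<Sum>i<n. c n i * W n i \<omega>\<bar>}
        \<le> mean n (\<lambda>i. (c n i)\<^sup>2) / t\<^sup>2 * (1 / real n)" .
    moreover have "{\<omega>\<in>space (M n). real n * t \<le> \<bar>\<Sum>i<n. c n i * W n i \<omega>\<bar>} \<in> sets (M n)" by measurable
    ultimately show ?case
      using elim(1) unfolding set_eq indep_std_normal_def by blast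
  qed
qed

lemma conv_oprob_mean_square_std_normal:
  assumes W: "eventually (\<lambda>n. indep_std_normal (M n) (W n) n) sequentially"
  shows "conv_oprob M (\<lambda>n \<omega>. mean n (\<lambda>i. (W n i \<omega>)\<^sup>2)) 1"
proof (rule conv_oprob_tail_bound[where b = "\<lambda>n t. 2 / t\<^sup>2 * (1 / real n)"])
  fix t :: real assume "t > 0"
  show "(\<lambda>n. 2 / t\<^sup>2 * (1 / real n)) \<longlonglongrightarrow> 0"
    by (rule tendsto_mult_right_zero[OF lim_1_over_n])
  show "eventually (\<lambda>n. prob_space (M n) \<and>
      {\<omega>\<in>space (M n). t \<le> dist (mean n (\<lambda>i. (W n i \<omega>)\<^sup>2)) 1} \<in> sets (M n) \<and>
      measure (M n) {\<omega>\<in>space (M n). t \<le> dist (mean n (\<lambda>i. (W n i \<omega>)\<^sup>2)) 1}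
        \<le> 2 / t\<^sup>2 * (1 / real n)) sequentially"
    using W eventually_gt_at_top[of 0]
  proof eventually_elim
    case (elim n)
    have [measurable]: "(\<lambda>\<omega>. \<Sum>i<n. (W n i \<omega>)\<^sup>2) \<in> borel_measurable (M n)"
      using indep_std_normal_measurable[OF elim(1)] by (intro borel_measurable_sum) auto
    have "mean n (\<lambda>i. (W n i \<omega>)\<^sup>2) - 1 = ((\<Sum>i<n. (W n i \<omega>)\<^sup>2) - real n) / real n" for \<omega>
      using elim(2) by (simp add: mean_def field_simps)
    then have set_eq: "{\<omega>\<in>space (M n). t \<le> dist (mean n (\<lambda>i. (W n i \<omega>)\<^sup>2)) 1} =
        {\<omega>\<in>space (M n). real n * t \<le> \<bar>(\<Sum>i<n. (W n i \<omega>)\<^sup>2) - real n\<bar>}"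
      using elim(2) by (simp add: dist_real_def pos_le_divide_eq mult.commute)
    have "measure (M n) {\<omega>\<in>space (M n). real n * t \<le> \<bar>(\<Sum>i<n. (W n i \<omega>)\<^sup>2) - real n\<bar>}
        \<le> 2 * real n / (real n * t)\<^sup>2"
      using elim \<open>t > 0\<close> by (intro indep_std_normal_sum_squares_tail) auto
    also have "\<dots> = 2 / t\<^sup>2 * (1 / real n)"
      using elim(2) by (simp add: field_simps power2_eq_square)
    finally have "measure (M n) {\<omega>\<in>space (M n). real n * t \<le> \<bar>(\<Sum>i<n. (W n i \<omega>)\<^sup>2) - real n\<bar>}
        \<le> 2 / t\<^sup>2 * (1 / real n)" .
    moreover have "{\<omega>\<in>space (M n). real n * t \<le> \<bar>(\<Sum>i<n. (W n i \<omega>)\<^sup>2) - real n\<bar>} \<in> sets (M n)" by measurable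
    ultimately show ?case
      using elim(1) unfolding set_eq indep_std_normal_def by blast
  qed
qed


section \<open>The square root of a positive definite 2x2 matrix\<close>

text \<open>\<open>(A + \<surd>det A \<cdot> I) / \<surd>(tr A + 2\<surd>det A)\<close> for \<open>A = [[p, q], [q, r]]\<close>; by Cayley-Hamilton its square is \<open>A\<close>.\<close>

definition sqrt_mat2 :: "real \<Rightarrow> real \<Rightarrow> real \<Rightarrow> real^2^2" where
  "sqrt_mat2 p q r = (let s = sqrt (p * r - q\<^sup>2); t = sqrt (p + r + 2 * s)
     in (1 / t) *\<^sub>R vector [vector [p + s, q], vector [q, r + s]])"

lemma mat2_eq_iff:
  fixes S :: "real^2^2"
  shows "S = vector [vector [a, b], vector [c, d]] \<longleftrightarrow> S$1$1 = a \<and> S$1$2 = b \<and> S$2$1 = c \<and> S$2$2 = d"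
  by (auto simp: vec_eq_iff forall_2)

lemma mat2_mult_nth:
  fixes S T :: "real^2^2"
  shows "(S ** T) $ i $ j = S$i$1 * T$1$j + S$i$2 * T$2$j"
  by (simp add: matrix_matrix_mult_def sum_2)

lemma mat2_pos_def_iff:
  fixes u v w :: real
  shows "(\<forall>x::real^2. x \<noteq> 0 \<longrightarrow> x \<bullet> (vector [vector [u, v], vector [v, w]] *v x) > 0) \<longleftrightarrow>
    u > 0 \<and> u * w - v\<^sup>2 > 0"
proof -
  have quad: "x \<bullet> (vector [vector [u, v], vector [v, w]] *v x) = u * (x$1)\<^sup>2 + 2 * v * x$1 * x$2 + w * (x$2)\<^sup>2"
    for x :: "real^2"
    by (simp add: inner_vec_def matrix_vector_mult_def sum_2 power2_eq_square algebra_simps)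
  have nz: "x \<noteq> 0 \<longleftrightarrow> x$1 \<noteq> 0 \<or> x$2 \<noteq> 0" for x :: "real^2"
    by (auto simp: vec_eq_iff forall_2)
  show ?thesis
  proof
    assume pd: "\<forall>x::real^2. x \<noteq> 0 \<longrightarrow> x \<bullet> (vector [vector [u, v], vector [v, w]] *v x) > 0"
    from pd[rule_format, of "vector [1, 0]"] have "u > 0" by (simp add: quad nz)
    moreover from pd[rule_format, of "vector [v, - u]"] \<open>u > 0\<close> have "u * (u * w - v\<^sup>2) > 0"
      by (simp add: quad nz power2_eq_square algebra_simps)
    ultimately show "u > 0 \<and> u * w - v\<^sup>2 > 0" by (simp add: zero_less_mult_iff)
  next
    assume det: "u > 0 \<and> u * w - v\<^sup>2 > 0"
    have "u * (x \<bullet> (vector [vector [u, v], vector [v, w]] *v x)) =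
        (u * x$1 + v * x$2)\<^sup>2 + (u * w - v\<^sup>2) * (x$2)\<^sup>2"
      for x :: "real^2"
      by (simp add: quad power2_eq_square algebra_simps)
    moreover have "(u * x$1 + v * x$2)\<^sup>2 + (u * w - v\<^sup>2) * (x$2)\<^sup>2 > 0" if "x \<noteq> 0" for x :: "real^2"
      using that det by (cases "x$2 = 0") (auto simp: nz add_nonneg_pos)
    ultimately show "\<forall>x::real^2. x \<noteq> 0 \<longrightarrow> x \<bullet> (vector [vector [u, v], vector [v, w]] *v x) > 0"
      using det by (metis zero_less_mult_pos)
  qed
qed

lemma pos_det_imp_pos:
  fixes p q r :: real
  assumes "p > 0" "p * r - q\<^sup>2 > 0"
  shows "r > 0"
proof -
  have "p * r > 0" using assms(2) zero_le_power2[of q] by linarith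
  then show ?thesis using assms(1) by (simp add: zero_less_mult_iff)
qed

lemma sqrt_mat2_eq:
  assumes "s = sqrt (p * r - q\<^sup>2)" "t = sqrt (p + r + 2 * s)"
  shows "sqrt_mat2 p q r = vector [vector [(p + s) / t, q / t], vector [q / t, (r + s) / t]]"
  using assms by (simp add: sqrt_mat2_def Let_def vec_eq_iff forall_2)

lemma sqrt_mat2_symmetric_pos_def:
  assumes "p > 0" "p * r - q\<^sup>2 > 0"
  shows "transpose (sqrt_mat2 p q r) = sqrt_mat2 p q r"
    and "\<forall>x. x \<noteq> 0 \<longrightarrow> x \<bullet> (sqrt_mat2 p q r *v x) > 0"
    and "sqrt_mat2 p q r ** sqrt_mat2 p q r = vector [vector [p, q], vector [q, r]]"
proof -
  define s where "s = sqrt (p * r - q\<^sup>2)"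
  define t where "t = sqrt (p + r + 2 * s)"
  have "s > 0" "s\<^sup>2 = p * r - q\<^sup>2" unfolding s_def using assms by simp_all
  moreover have "r > 0" using pos_det_imp_pos[OF assms] .
  ultimately have "t > 0" "t\<^sup>2 = p + r + 2 * s" unfolding t_def using assms by simp_all
  note st = \<open>s > 0\<close> \<open>s\<^sup>2 = p * r - q\<^sup>2\<close> this
  note S = sqrt_mat2_eq[OF s_def t_def]
  show "transpose (sqrt_mat2 p q r) = sqrt_mat2 p q r"
    unfolding S by (simp add: vec_eq_iff forall_2 transpose_def)
  have "(p + s) / t * ((r + s) / t) - (q / t)\<^sup>2 = ((p + s) * (r + s) - q\<^sup>2) / t\<^sup>2"
    by (simp add: power_divide diff_divide_distrib power2_eq_square)
  also have "(p + s) * (r + s) - q\<^sup>2 = s * t\<^sup>2"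
    using st(2,4) by algebra
  finally have "(p + s) / t * ((r + s) / t) - (q / t)\<^sup>2 = s"
    using st(3) by simp
  then show "\<forall>x. x \<noteq> 0 \<longrightarrow> x \<bullet> (sqrt_mat2 p q r *v x) > 0"
    unfolding S mat2_pos_def_iff using st assms by simp
  have div: "a / t * (b / t) + c / t * (d / t) = (a * b + c * d) / t\<^sup>2" for a b c d
    by (simp add: power2_eq_square add_divide_distrib)
  have h: "(p + s) * (p + s) + q * q = p * t\<^sup>2" "(p + s) * q + q * (r + s) = q * t\<^sup>2"
    "q * (p + s) + (r + s) * q = q * t\<^sup>2" "q * q + (r + s) * (r + s) = r * t\<^sup>2"
    using st(2,4) by algebra+
  show "sqrt_mat2 p q r ** sqrt_mat2 p q r = vector [vector [p, q], vector [q, r]]"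
    unfolding S mat2_eq_iff mat2_mult_nth vector_2 div h using st(3) by simp
qed

lemma sqrt_mat2_unique:
  assumes sym: "transpose S = S" and pd: "\<forall>x. x \<noteq> 0 \<longrightarrow> x \<bullet> (S *v x) > 0"
    and sq: "S ** S = vector [vector [p, q], vector [q, r]]"
  shows "S = sqrt_mat2 p q r"
proof -
  define u v w where "u = S$1$1" and "v = S$1$2" and "w = S$2$2"
  have "S$2$1 = v" using arg_cong[OF sym, of "\<lambda>X. X$2$1"] by (simp add: v_def transpose_def)
  then have S: "S = vector [vector [u, v], vector [v, w]]" by (simp add: mat2_eq_iff u_def v_def w_def)
  have "u > 0" and det: "u * w - v\<^sup>2 > 0" using pd unfolding S mat2_pos_def_iff by auto
  then have "w > 0" using pos_det_imp_pos by blast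
  have p: "u\<^sup>2 + v\<^sup>2 = p" and q: "u * v + v * w = q" and r: "v\<^sup>2 + w\<^sup>2 = r"
    using sq unfolding S mat2_eq_iff mat2_mult_nth by (simp_all add: power2_eq_square)
  have "(u * w - v\<^sup>2)\<^sup>2 = p * r - q\<^sup>2"
    unfolding p[symmetric] q[symmetric] r[symmetric] by (simp add: power2_eq_square algebra_simps)
  then have s: "u * w - v\<^sup>2 = sqrt (p * r - q\<^sup>2)" using det by (simp add: real_sqrt_unique)
  have "(u + w)\<^sup>2 = p + r + 2 * (u * w - v\<^sup>2)"
    unfolding p[symmetric] r[symmetric] by (simp add: power2_eq_square algebra_simps)
  then have t: "u + w = sqrt (p + r + 2 * (u * w - v\<^sup>2))"
    using \<open>u > 0\<close> \<open>w > 0\<close> by (simp add: real_sqrt_unique)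
  have "u * (u + w) = p + (u * w - v\<^sup>2)" "v * (u + w) = q" "w * (u + w) = r + (u * w - v\<^sup>2)"
    unfolding p[symmetric] q[symmetric] r[symmetric] by (simp_all add: power2_eq_square algebra_simps)
  then show ?thesis
    unfolding sqrt_mat2_eq[OF refl refl] s[symmetric] unfolding t[symmetric] S mat2_eq_iff
    using \<open>u > 0\<close> \<open>w > 0\<close> by (simp add: field_simps)
qed

lemma pd_sqrt_mat2:
  assumes "p > 0" "p * r - q\<^sup>2 > 0"
  shows "pd_sqrt (vector [vector [p, q], vector [q, r]]) = sqrt_mat2 p q r"
  unfolding pd_sqrt_def
proof (rule the_equality)
  show "\<And>S. transpose S = S \<and> (\<forall>x. x \<noteq> 0 \<longrightarrow> x \<bullet> (S *v x) > 0) \<and> S ** S = vector [vector [p, q], vector [q, r]]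
      \<Longrightarrow> S = sqrt_mat2 p q r"
    using sqrt_mat2_unique by blast
qed (use sqrt_mat2_symmetric_pos_def[OF assms] in blast)


lemma root_n_close_to_sqrt_mat2:
  assumes P: "root_n_close_to M P P' p" and Q: "root_n_close_to M Q Q' q" and R: "root_n_close_to M R R' r"
    and "p > 0" and det: "p * r - q\<^sup>2 > 0"
  shows "root_n_close_to M (\<lambda>n \<omega>. sqrt_mat2 (P n \<omega>) (Q n \<omega>) (R n \<omega>) $ i $ j)
    (\<lambda>n \<omega>. sqrt_mat2 (P' n \<omega>) (Q' n \<omega>) (R' n \<omega>) $ i $ j) (sqrt_mat2 p q r $ i $ j)"
proof -
  have entry: "sqrt_mat2 a b c $ i $ j = 1 / sqrt (a + c + 2 * sqrt (a * c - b\<^sup>2)) *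
      (vector [vector [a + sqrt (a * c - b\<^sup>2), b], vector [b, c + sqrt (a * c - b\<^sup>2)]] :: real^2^2) $ i $ j"
    for a b c by (simp add: sqrt_mat2_def Let_def)
  have "r > 0" using pos_det_imp_pos[OF \<open>p > 0\<close> det] .
  have "root_n_close_to M (\<lambda>n \<omega>. P n \<omega> * R n \<omega> - Q n \<omega> * Q n \<omega>) (\<lambda>n \<omega>. P' n \<omega> * R' n \<omega> - Q' n \<omega> * Q' n \<omega>)
      (p * r - q * q)"
    by (intro root_n_close_to_diff root_n_close_to_mult P Q R)
  from root_n_close_to_sqrt[OF this] have S: "root_n_close_to M
      (\<lambda>n \<omega>. sqrt (P n \<omega> * R n \<omega> - (Q n \<omega>)\<^sup>2)) (\<lambda>n \<omega>. sqrt (P' n \<omega> * R' n \<omega> - (Q' n \<omega>)\<^sup>2))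
      (sqrt (p * r - q\<^sup>2))"
    using det by (simp add: power2_eq_square)
  have two: "root_n_close_to M (\<lambda>n \<omega>. 2) (\<lambda>n \<omega>. 2) 2"
    using P conv_oprob_eventually_prob_space root_n_close_to_const unfolding root_n_close_to_def by blast
  have "root_n_close_to M (\<lambda>n \<omega>. P n \<omega> + R n \<omega> + 2 * sqrt (P n \<omega> * R n \<omega> - (Q n \<omega>)\<^sup>2))
      (\<lambda>n \<omega>. P' n \<omega> + R' n \<omega> + 2 * sqrt (P' n \<omega> * R' n \<omega> - (Q' n \<omega>)\<^sup>2))
      (p + r + 2 * sqrt (p * r - q\<^sup>2))"
    by (intro root_n_close_to_add root_n_close_to_mult P R two S)
  moreover have "p + r + 2 * sqrt (p * r - q\<^sup>2) > 0"
    using \<open>p > 0\<close> \<open>r > 0\<close> det by (simp add: add_pos_nonneg)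
  ultimately have "root_n_close_to M (\<lambda>n \<omega>. 1 / sqrt (P n \<omega> + R n \<omega> + 2 * sqrt (P n \<omega> * R n \<omega> - (Q n \<omega>)\<^sup>2)))
      (\<lambda>n \<omega>. 1 / sqrt (P' n \<omega> + R' n \<omega> + 2 * sqrt (P' n \<omega> * R' n \<omega> - (Q' n \<omega>)\<^sup>2)))
      (1 / sqrt (p + r + 2 * sqrt (p * r - q\<^sup>2)))"
    by (intro root_n_close_to_inverse root_n_close_to_sqrt) auto
  moreover have "root_n_close_to M
      (\<lambda>n \<omega>. (vector [vector [P n \<omega> + sqrt (P n \<omega> * R n \<omega> - (Q n \<omega>)\<^sup>2), Q n \<omega>],
        vector [Q n \<omega>, R n \<omega> + sqrt (P n \<omega> * R n \<omega> - (Q n \<omega>)\<^sup>2)]] :: real^2^2) $ i $ j)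
      (\<lambda>n \<omega>. (vector [vector [P' n \<omega> + sqrt (P' n \<omega> * R' n \<omega> - (Q' n \<omega>)\<^sup>2), Q' n \<omega>],
        vector [Q' n \<omega>, R' n \<omega> + sqrt (P' n \<omega> * R' n \<omega> - (Q' n \<omega>)\<^sup>2)]] :: real^2^2) $ i $ j)
      ((vector [vector [p + sqrt (p * r - q\<^sup>2), q], vector [q, r + sqrt (p * r - q\<^sup>2)]] :: real^2^2) $ i $ j)"
    using exhaust_2[of i] exhaust_2[of j] root_n_close_to_add[OF P S] root_n_close_to_add[OF R S] Q by auto
  ultimately show ?thesis
    unfolding entry by (rule root_n_close_to_mult)
qed

lemma dist_cmat: "dist (cmat A) (cmat B) = dist A B"
  unfolding cmat_def dist_vec_def by (simp add: dist_norm flip: of_real_diff)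

lemma cmat_zero: "cmat 0 = 0"
  by (simp add: cmat_def vec_eq_iff)

lemma cmat_scaleR_diff: "cmat (c *\<^sub>R (A - B)) = c *\<^sub>R (cmat A - cmat B)"
  by (simp add: cmat_def vec_eq_iff) (simp add: scaleR_conv_of_real algebra_simps)

lemma conv_oprob_cmat: "conv_oprob M A C \<Longrightarrow> conv_oprob M (\<lambda>n \<omega>. cmat (A n \<omega>)) (cmat C)"
  by (erule conv_oprob_le) (simp add: dist_cmat)

lemma Etil_eq_cmat_sqrt_mat2:
  assumes "tsx \<Delta> \<rho> x Z n \<omega> > 0"
  shows "Etil \<Delta> \<rho> x Z n \<omega> = cmat (sqrt_mat2 1 (tx \<Delta> \<rho> x Z n \<omega>) (tx2 \<Delta> \<rho> x Z n \<omega>))"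
proof -
  define m a where "m = tx \<Delta> \<rho> x Z n \<omega>" and "a = tx2 \<Delta> \<rho> x Z n \<omega>"
  define s where "s = sqrt (1 * a - m\<^sup>2)"
  have pos: "a - m\<^sup>2 > 0" using assms by (simp add: tsx_def m_def a_def)
  moreover have "s \<ge> 0" using pos unfolding s_def by simp
  ultimately have "a + 1 + 2 * s \<ge> 0" using zero_le_power2[of m] by linarith
  then have d: "csqrt (complex_of_real a + 1 + 2 * complex_of_real s) = complex_of_real (sqrt (1 + a + 2 * s))"
    using csqrt_of_real[of "a + 1 + 2 * s"] by (simp add: add.commute)
  have "csqrt (complex_of_real (tsx \<Delta> \<rho> x Z n \<omega>)) = complex_of_real s"
    using pos by (simp add: tsx_def s_def m_def a_def csqrt_of_real)
  then show ?thesis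
    unfolding Etil_def Let_def m_def[symmetric] a_def[symmetric]
    by (simp add: d sqrt_mat2_eq[OF s_def refl] cmat_def vec_eq_iff forall_2)
qed

lemma Ehat_eq_sqrt_mat2:
  assumes "n > 0" and "mean n (\<lambda>i. (x n i)\<^sup>2) - (mean n (\<lambda>i. x n i))\<^sup>2 > 0"
  shows "Ehat x n = sqrt_mat2 1 (mean n (\<lambda>i. x n i)) (mean n (\<lambda>i. (x n i)\<^sup>2))"
proof -
  have "(\<chi> i j. mean n (\<lambda>k. (vector [1, x n k] :: real^2) $ i * (vector [1, x n k] :: real^2) $ j)) =
      vector [vector [1, mean n (\<lambda>i. x n i)], vector [mean n (\<lambda>i. x n i), mean n (\<lambda>i. (x n i)\<^sup>2)]]"
    using assms(1) by (simp add: vec_eq_iff forall_2 mean_def power2_eq_square)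
  then show ?thesis unfolding Ehat_def using assms(2) by (simp add: pd_sqrt_mat2)
qed

section \<open>The private regression statistics\<close>

lemma clip_id: "a \<le> z \<Longrightarrow> z \<le> b \<Longrightarrow> clip a b z = z"
  unfolding clip_def by simp

lemma clip_id_abs: "\<bar>z\<bar> \<le> b \<Longrightarrow> clip (- b) b z = z"
  by (rule clip_id) (simp_all add: abs_le_iff)

lemma clip_id_square: "\<bar>z\<bar> \<le> b \<Longrightarrow> clip 0 (b\<^sup>2) (z\<^sup>2) = z\<^sup>2"
  by (rule clip_id) (simp_all add: power2_le_iff_abs_le[OF order_trans[OF abs_ge_zero]])

lemma mean_cong: "(\<And>i. i < n \<Longrightarrow> f i = g i) \<Longrightarrow> mean n f = mean n g"
  unfolding mean_def by (metis lessThan_iff sum.cong)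

lemma mean_add: "mean n (\<lambda>i. f i + g i) = mean n f + mean n g"
  unfolding mean_def by (simp add: sum.distrib add_divide_distrib)

lemma mean_cmult: "mean n (\<lambda>i. c * f i) = c * mean n f"
  unfolding mean_def by (simp add: sum_distrib_left)

lemma mean_const: "n > 0 \<Longrightarrow> mean n (\<lambda>i. c) = c"
  unfolding mean_def by simp

lemma root_n_noise_scale_lim:
  fixes \<Delta> \<rho> :: "nat \<Rightarrow> real"
  assumes lim: "(\<lambda>n. (\<Delta> n) ^ p / (\<rho> n * real n)) \<longlonglongrightarrow> 0" and "c \<ge> 0"
  shows "(\<lambda>n. sqrt (real n) * sqrt (c * (\<Delta> n) ^ p / ((\<rho> n / 5) * (real n)\<^sup>2))) \<longlonglongrightarrow> 0"
proof (rule Lim_transform_eventually)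
  show "(\<lambda>n. sqrt (5 * c * ((\<Delta> n) ^ p / (\<rho> n * real n)))) \<longlonglongrightarrow> 0"
    using tendsto_real_sqrt[OF tendsto_mult_right_zero[OF lim, of "5 * c"]] by simp
  have scale: "real n * (c * (\<Delta> n) ^ p / ((\<rho> n / 5) * (real n)\<^sup>2)) = 5 * c * ((\<Delta> n) ^ p / (\<rho> n * real n))"
    if "n > 0" for n
    using that by (simp add: field_simps power2_eq_square)
  show "eventually (\<lambda>n. sqrt (5 * c * ((\<Delta> n) ^ p / (\<rho> n * real n))) =
      sqrt (real n) * sqrt (c * (\<Delta> n) ^ p / ((\<rho> n / 5) * (real n)\<^sup>2))) sequentially"
    using eventually_gt_at_top[of "0::nat"] by eventually_elim (simp only: real_sqrt_mult[symmetric] scale)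
qed

locale dp_linear_regression =
  fixes M :: "nat \<Rightarrow> 'a measure"
    and x :: "nat \<Rightarrow> nat \<Rightarrow> real"
    and y :: "nat \<Rightarrow> nat \<Rightarrow> 'a \<Rightarrow> real"
    and Z :: "nat \<Rightarrow> nat \<Rightarrow> 'a \<Rightarrow> real"
    and \<Delta> \<rho> :: "nat \<Rightarrow> real"
    and \<sigma>e \<beta>2 \<beta>1 cx cx2 :: real
  assumes \<sigma>e_pos: "\<sigma>e > 0"
    and prob: "\<And>n. n > 2 \<Longrightarrow> prob_space (M n)"
    and y_distr: "\<And>n i. n > 2 \<Longrightarrow> i < n \<Longrightarrow>
                   distributed (M n) lborel (y n i) (normal_density (\<beta>2 + \<beta>1 * x n i) \<sigma>e)"
    and Z_distr: "\<And>n j. n > 2 \<Longrightarrow> j < 5 \<Longrightarrow> distributed (M n) lborel (Z n j) std_normal_density"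
    and indep: "\<And>n. n > 2 \<Longrightarrow> prob_space.indep_vars (M n) (\<lambda>_. borel)
                   (\<lambda>k. case k of Inl i \<Rightarrow> y n i | Inr j \<Rightarrow> Z n j) ({..<n} <+> {..<5})"
    and A1x: "(\<lambda>n. mean n (\<lambda>i. x n i)) \<longlonglongrightarrow> cx"
    and A1x2: "(\<lambda>n. mean n (\<lambda>i. (x n i)^2)) \<longlonglongrightarrow> cx2"
    and A1c: "cx2 > cx^2"
    and A3a: "(\<lambda>n. (\<Delta> n)^2 / (\<rho> n * real n)) \<longlonglongrightarrow> 0"
    and A3b: "(\<lambda>n. (\<Delta> n)^4 / (\<rho> n * real n)) \<longlonglongrightarrow> 0"
    and A4y: "(\<lambda>n. measure (M n) {\<omega> \<in> space (M n). \<exists>i<n. y n i \<omega> \<notin> {- \<Delta> n .. \<Delta> n}}) \<longlonglongrightarrow> 0"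
    and A4x: "\<And>n i. n > 2 \<Longrightarrow> i < n \<Longrightarrow> x n i \<in> {- \<Delta> n .. \<Delta> n}"
begin

abbreviation "xbar n \<equiv> mean n (\<lambda>i. x n i)"
abbreviation "x2bar n \<equiv> mean n (\<lambda>i. (x n i)\<^sup>2)"
abbreviation "ybar n \<omega> \<equiv> mean n (\<lambda>i. y n i \<omega>)"
abbreviation "xybar n \<omega> \<equiv> mean n (\<lambda>i. x n i * y n i \<omega>)"

definition "sd_mean n = sqrt (2 * (\<Delta> n)\<^sup>2 / ((\<rho> n / 5) * (real n)\<^sup>2))"
definition "sd_square n = sqrt ((\<Delta> n) ^ 4 / (2 * (\<rho> n / 5) * (real n)\<^sup>2))"
definition "sd_cross n = sqrt (2 * (\<Delta> n) ^ 4 / ((\<rho> n / 5) * (real n)\<^sup>2))"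
definition "clipping_event n = {\<omega> \<in> space (M n). \<exists>i<n. y n i \<omega> \<notin> {- \<Delta> n .. \<Delta> n}}"
definition "err n i \<omega> = (y n i \<omega> - (\<beta>2 + \<beta>1 * x n i)) / \<sigma>e"

lemma eventually_prob_space: "eventually (\<lambda>n. prob_space (M n)) sequentially"
  using eventually_gt_at_top[of 2] by eventually_elim (rule prob)

lemma root_n_sd_lim:
  "(\<lambda>n. sqrt (real n) * sd_mean n) \<longlonglongrightarrow> 0"
  "(\<lambda>n. sqrt (real n) * sd_square n) \<longlonglongrightarrow> 0"
  "(\<lambda>n. sqrt (real n) * sd_cross n) \<longlonglongrightarrow> 0"
  using root_n_noise_scale_lim[OF A3a, of 2] root_n_noise_scale_lim[OF A3b, of "1 / 2"]
    root_n_noise_scale_lim[OF A3b, of 2]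
  by (simp_all add: sd_mean_def sd_square_def sd_cross_def mult.assoc)

lemma y_measurable: "n > 2 \<Longrightarrow> i < n \<Longrightarrow> y n i \<in> borel_measurable (M n)"
  using distributed_measurable[OF y_distr] by simp

lemma clipping_event_sets:
  assumes "n > 2"
  shows "clipping_event n \<in> sets (M n)"
proof -
  have "clipping_event n = {\<omega> \<in> space (M n). \<exists>i\<in>{..<n}. y n i \<omega> \<notin> {- \<Delta> n .. \<Delta> n}}"
    unfolding clipping_event_def by auto
  also have "\<dots> \<in> sets (M n)"
    using y_measurable[OF assms] by (intro sets.sets_Collect_finite_Ex) auto
  finally show ?thesis .
qed

lemma clipping_event_lim: "(\<lambda>n. measure (M n) (clipping_event n)) \<longlonglongrightarrow> 0"
  using A4y unfolding clipping_event_def .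

lemma x_abs_le:
  assumes "n > 2" "i < n"
  shows "\<bar>x n i\<bar> \<le> \<Delta> n"
  using A4x[OF assms] by auto

lemma y_abs_le: "\<omega> \<in> space (M n) - clipping_event n \<Longrightarrow> i < n \<Longrightarrow> \<bar>y n i \<omega>\<bar> \<le> \<Delta> n"
  unfolding clipping_event_def by (auto simp: abs_le_iff)

context
  fixes n :: nat and \<omega> :: 'a
  assumes n: "n > 2"
begin

lemma tx_eq: "tx \<Delta> \<rho> x Z n \<omega> = xbar n + sd_mean n * Z n 0 \<omega>"
  unfolding tx_def sd_mean_def using x_abs_le[OF n] by (auto intro!: mean_cong clip_id_abs)

lemma tx2_eq: "tx2 \<Delta> \<rho> x Z n \<omega> = x2bar n + sd_square n * Z n 2 \<omega>"
  unfolding tx2_def sd_square_def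
  using x_abs_le[OF n] by (auto intro!: mean_cong clip_id_square)

context
  assumes \<omega>: "\<omega> \<in> space (M n) - clipping_event n"
begin

lemma ty_eq: "ty \<Delta> \<rho> y Z n \<omega> = ybar n \<omega> + sd_mean n * Z n 1 \<omega>"
  unfolding ty_def sd_mean_def using y_abs_le[OF \<omega>] by (auto intro!: mean_cong clip_id_abs)

lemma ty2_eq: "ty2 \<Delta> \<rho> y Z n \<omega> = mean n (\<lambda>i. (y n i \<omega>)\<^sup>2) + sd_square n * Z n 4 \<omega>"
  unfolding ty2_def sd_square_def
  using y_abs_le[OF \<omega>] by (auto intro!: mean_cong clip_id_square)

lemma txy_eq: "txy \<Delta> \<rho> x y Z n \<omega> = xybar n \<omega> + sd_cross n * Z n 3 \<omega>"
  unfolding txy_def sd_cross_def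
proof (intro arg_cong2[where f = "(+)"] refl mean_cong clip_id_abs)
  fix i assume "i < n"
  then have "\<bar>x n i\<bar> \<le> \<Delta> n" "\<bar>y n i \<omega>\<bar> \<le> \<Delta> n" using x_abs_le[OF n] y_abs_le[OF \<omega>] by auto
  then show "\<bar>x n i * y n i \<omega>\<bar> \<le> (\<Delta> n)\<^sup>2"
    unfolding abs_mult power2_eq_square by (intro mult_mono) auto
qed

end

end

lemma root_n_close_to_release:
  assumes j: "j < 5" and s: "(\<lambda>n. sqrt (real n) * s n) \<longlonglongrightarrow> 0" and S: "conv_oprob M S a"
    and eq: "\<And>n \<omega>. n > 2 \<Longrightarrow> \<omega> \<in> space (M n) - clipping_event n \<Longrightarrow> R n \<omega> = S n \<omega> + s n * Z n j \<omega>"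
  shows "root_n_close_to M R S a"
proof (rule root_n_close_toI[OF _ S])
  have "eventually (\<lambda>n. prob_space (M n) \<and> distributed (M n) lborel (Z n j) std_normal_density) sequentially"
    using eventually_gt_at_top[of 2] by eventually_elim (simp add: prob Z_distr j)
  from conv_oprob_scaled_std_normal[OF this s]
  have noise: "conv_oprob M (\<lambda>n \<omega>. sqrt (real n) * s n * Z n j \<omega>) 0" .
  show "root_n_close M R S"
    unfolding root_n_close_def
  proof (rule conv_oprob_cong_off[OF noise clipping_event_lim])
    show "eventually (\<lambda>n. clipping_event n \<in> sets (M n) \<and> (\<forall>\<omega>\<in>space (M n) - clipping_event n.
        sqrt (real n) * (R n \<omega> - S n \<omega>) = sqrt (real n) * s n * Z n j \<omega>)) sequentially"
      using eventually_gt_at_top[of 2] by eventually_elim (simp add: clipping_event_sets eq)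
  qed
qed

lemma err_indep_std_normal:
  assumes n: "n > 2"
  shows "indep_std_normal (M n) (err n) n"
proof -
  interpret prob_space "M n" by (rule prob[OF n])
  let ?Y = "\<lambda>k. case k of Inl i \<Rightarrow> y n i | Inr j \<Rightarrow> Z n j"
  have "indep_vars (\<lambda>_. borel) ?Y (Inl ` {..<n})"
    by (rule indep_vars_subset[OF indep[OF n]]) auto
  then have "indep_vars (\<lambda>_. borel) (\<lambda>i. y n i) {..<n}"
    using indep_vars_reindex[of Inl "{..<n}" "\<lambda>_. borel" ?Y] by simp
  then have "indep_vars (\<lambda>_. borel) (err n) {..<n}"
    unfolding err_def[abs_def] by (rule indep_vars_compose2) auto
  moreover have "distributed (M n) lborel (err n i) std_normal_density" if "i < n" for i
    using normal_standard_normal_convert[OF \<sigma>e_pos] y_distr[OF n that] by (simp add: err_def[abs_def])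
  ultimately show ?thesis unfolding indep_std_normal_def using prob[OF n] by blast
qed

lemma y_eq: "y n i \<omega> = (\<beta>2 + \<beta>1 * x n i) + \<sigma>e * err n i \<omega>"
  unfolding err_def using \<sigma>e_pos by simp

lemma ybar_eq: "n > 0 \<Longrightarrow> ybar n \<omega> = (\<beta>2 + \<beta>1 * xbar n) + \<sigma>e * mean n (\<lambda>i. err n i \<omega>)"
  by (simp add: y_eq mean_add mean_cmult mean_const)

lemma xybar_eq: "xybar n \<omega> = (\<beta>2 * xbar n + \<beta>1 * x2bar n) + \<sigma>e * mean n (\<lambda>i. x n i * err n i \<omega>)"
proof -
  have "xybar n \<omega> = mean n (\<lambda>i. (\<beta>2 * x n i + \<beta>1 * (x n i)\<^sup>2) + \<sigma>e * (x n i * err n i \<omega>))"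
    by (rule mean_cong) (simp add: y_eq algebra_simps power2_eq_square)
  then show ?thesis by (simp add: mean_add mean_cmult)
qed

lemma y2bar_eq:
  assumes "n > 0"
  shows "mean n (\<lambda>i. (y n i \<omega>)\<^sup>2) = (\<beta>2\<^sup>2 + 2 * \<beta>2 * \<beta>1 * xbar n + \<beta>1\<^sup>2 * x2bar n)
    + 2 * \<sigma>e * mean n (\<lambda>i. (\<beta>2 + \<beta>1 * x n i) * err n i \<omega>) + \<sigma>e\<^sup>2 * mean n (\<lambda>i. (err n i \<omega>)\<^sup>2)"
proof -
  have "mean n (\<lambda>i. (y n i \<omega>)\<^sup>2) = mean n (\<lambda>i. (\<beta>2\<^sup>2 + ((2 * \<beta>2 * \<beta>1) * x n i + \<beta>1\<^sup>2 * (x n i)\<^sup>2))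
      + (2 * \<sigma>e) * ((\<beta>2 + \<beta>1 * x n i) * err n i \<omega>) + \<sigma>e\<^sup>2 * (err n i \<omega>)\<^sup>2)"
    by (rule mean_cong) (simp add: y_eq algebra_simps power2_eq_square)
  then show ?thesis using assms by (simp add: mean_add mean_cmult mean_const)
qed

lemma eventually_err_indep_std_normal: "eventually (\<lambda>n. indep_std_normal (M n) (err n) n) sequentially"
  using eventually_gt_at_top[of 2] by eventually_elim (rule err_indep_std_normal)

lemma conv_oprob_mean_err: "conv_oprob M (\<lambda>n \<omega>. mean n (\<lambda>i. err n i \<omega>)) 0"
proof -
  have "(\<lambda>n. mean n (\<lambda>i. 1\<^sup>2)) \<longlonglongrightarrow> 1"
    by (rule tendsto_eventually[OF eventually_mono[OF eventually_gt_at_top[of 0]]]) (simp add: mean_const)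
  from conv_oprob_mean_weighted_std_normal[OF eventually_err_indep_std_normal this] show ?thesis by simp
qed

lemma conv_oprob_ybar: "conv_oprob M ybar (\<beta>2 + \<beta>1 * cx)"
proof -
  have "conv_oprob M (\<lambda>n \<omega>. (\<beta>2 + \<beta>1 * xbar n) + \<sigma>e * mean n (\<lambda>i. err n i \<omega>)) ((\<beta>2 + \<beta>1 * cx) + \<sigma>e * 0)"
    by (intro conv_oprob_add conv_oprob_mult conv_oprob_const[OF _ eventually_prob_space]
        conv_oprob_mean_err tendsto_intros A1x)
  then have "conv_oprob M (\<lambda>n \<omega>. (\<beta>2 + \<beta>1 * xbar n) + \<sigma>e * mean n (\<lambda>i. err n i \<omega>)) (\<beta>2 + \<beta>1 * cx)"
    by simp
  then show ?thesis
    by (rule conv_oprob_cong[OF _ eventually_mono[OF eventually_gt_at_top[of 0]]]) (simp add: ybar_eq)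
qed

lemma conv_oprob_xybar: "conv_oprob M xybar (\<beta>2 * cx + \<beta>1 * cx2)"
proof -
  have "conv_oprob M (\<lambda>n \<omega>. (\<beta>2 * xbar n + \<beta>1 * x2bar n) + \<sigma>e * mean n (\<lambda>i. x n i * err n i \<omega>))
      ((\<beta>2 * cx + \<beta>1 * cx2) + \<sigma>e * 0)"
    by (intro conv_oprob_add conv_oprob_mult conv_oprob_const[OF _ eventually_prob_space]
        conv_oprob_mean_weighted_std_normal[OF eventually_err_indep_std_normal A1x2] tendsto_intros A1x A1x2)
  then show ?thesis by (simp add: xybar_eq)
qed

lemma conv_oprob_y2bar:
  "conv_oprob M (\<lambda>n \<omega>. mean n (\<lambda>i. (y n i \<omega>)\<^sup>2)) (\<beta>2\<^sup>2 + 2 * cx * \<beta>1 * \<beta>2 + \<beta>1\<^sup>2 * cx2 + \<sigma>e\<^sup>2)"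
proof -
  have lim: "(\<lambda>n. \<beta>2\<^sup>2 + 2 * \<beta>2 * \<beta>1 * xbar n + \<beta>1\<^sup>2 * x2bar n) \<longlonglongrightarrow> \<beta>2\<^sup>2 + 2 * \<beta>2 * \<beta>1 * cx + \<beta>1\<^sup>2 * cx2"
    by (intro tendsto_intros A1x A1x2)
  have weights_eq: "mean n (\<lambda>i. (\<beta>2 + \<beta>1 * x n i)\<^sup>2) = \<beta>2\<^sup>2 + 2 * \<beta>2 * \<beta>1 * xbar n + \<beta>1\<^sup>2 * x2bar n"
    if "n > 0" for n
  proof -
    have "mean n (\<lambda>i. (\<beta>2 + \<beta>1 * x n i)\<^sup>2) = mean n (\<lambda>i. \<beta>2\<^sup>2 + ((2 * \<beta>2 * \<beta>1) * x n i + \<beta>1\<^sup>2 * (x n i)\<^sup>2))"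
      by (rule mean_cong) (simp add: algebra_simps power2_eq_square)
    then show ?thesis using that by (simp add: mean_add mean_cmult mean_const)
  qed
  have weights: "(\<lambda>n. mean n (\<lambda>i. (\<beta>2 + \<beta>1 * x n i)\<^sup>2)) \<longlonglongrightarrow> \<beta>2\<^sup>2 + 2 * \<beta>2 * \<beta>1 * cx + \<beta>1\<^sup>2 * cx2"
    by (rule Lim_transform_eventually[OF lim eventually_mono[OF eventually_gt_at_top[of 0]]])
      (simp add: weights_eq)
  have "conv_oprob M (\<lambda>n \<omega>. (\<beta>2\<^sup>2 + 2 * \<beta>2 * \<beta>1 * xbar n + \<beta>1\<^sup>2 * x2bar n)
      + 2 * \<sigma>e * mean n (\<lambda>i. (\<beta>2 + \<beta>1 * x n i) * err n i \<omega>) + \<sigma>e\<^sup>2 * mean n (\<lambda>i. (err n i \<omega>)\<^sup>2))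
      ((\<beta>2\<^sup>2 + 2 * \<beta>2 * \<beta>1 * cx + \<beta>1\<^sup>2 * cx2) + 2 * \<sigma>e * 0 + \<sigma>e\<^sup>2 * 1)"
    by (intro conv_oprob_add conv_oprob_mult conv_oprob_const[OF _ eventually_prob_space]
        conv_oprob_mean_weighted_std_normal[OF eventually_err_indep_std_normal weights]
        conv_oprob_mean_square_std_normal[OF eventually_err_indep_std_normal]
        tendsto_intros A1x A1x2)
  then have "conv_oprob M (\<lambda>n \<omega>. (\<beta>2\<^sup>2 + 2 * \<beta>2 * \<beta>1 * xbar n + \<beta>1\<^sup>2 * x2bar n)
      + 2 * \<sigma>e * mean n (\<lambda>i. (\<beta>2 + \<beta>1 * x n i) * err n i \<omega>) + \<sigma>e\<^sup>2 * mean n (\<lambda>i. (err n i \<omega>)\<^sup>2))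
      (\<beta>2\<^sup>2 + 2 * cx * \<beta>1 * \<beta>2 + \<beta>1\<^sup>2 * cx2 + \<sigma>e\<^sup>2)"
    by (simp add: algebra_simps)
  then show ?thesis
    by (rule conv_oprob_cong[OF _ eventually_mono[OF eventually_gt_at_top[of 0]]]) (simp add: y2bar_eq)
qed

lemma root_n_close_to_tx: "root_n_close_to M (tx \<Delta> \<rho> x Z) (\<lambda>n \<omega>. xbar n) cx"
  by (rule root_n_close_to_release[where j = 0, OF _ root_n_sd_lim(1)
        conv_oprob_const[OF A1x eventually_prob_space]])
    (simp_all add: tx_eq)

lemma root_n_close_to_tx2: "root_n_close_to M (tx2 \<Delta> \<rho> x Z) (\<lambda>n \<omega>. x2bar n) cx2"
  by (rule root_n_close_to_release[where j = 2, OF _ root_n_sd_lim(2)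
        conv_oprob_const[OF A1x2 eventually_prob_space]])
    (simp_all add: tx2_eq)

lemma root_n_close_to_ty: "root_n_close_to M (ty \<Delta> \<rho> y Z) ybar (\<beta>2 + \<beta>1 * cx)"
  by (rule root_n_close_to_release[where j = 1, OF _ root_n_sd_lim(1) conv_oprob_ybar]) (simp_all add: ty_eq)

lemma root_n_close_to_txy: "root_n_close_to M (txy \<Delta> \<rho> x y Z) xybar (\<beta>2 * cx + \<beta>1 * cx2)"
  by (rule root_n_close_to_release[where j = 3, OF _ root_n_sd_lim(3) conv_oprob_xybar]) (simp_all add: txy_eq)

lemma conv_oprob_ty2: "conv_oprob M (ty2 \<Delta> \<rho> y Z) (\<beta>2\<^sup>2 + 2 * cx * \<beta>1 * \<beta>2 + \<beta>1\<^sup>2 * cx2 + \<sigma>e\<^sup>2)"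
proof -
  have "root_n_close_to M (ty2 \<Delta> \<rho> y Z) (\<lambda>n \<omega>. mean n (\<lambda>i. (y n i \<omega>)\<^sup>2))
      (\<beta>2\<^sup>2 + 2 * cx * \<beta>1 * \<beta>2 + \<beta>1\<^sup>2 * cx2 + \<sigma>e\<^sup>2)"
    by (rule root_n_close_to_release[where j = 4, OF _ root_n_sd_lim(2) conv_oprob_y2bar])
      (simp_all add: ty2_eq)
  then show ?thesis by (rule root_n_close_toD(2))
qed

lemma root_n_close_to_tsx: "root_n_close_to M (tsx \<Delta> \<rho> x Z) (\<lambda>n \<omega>. x2bar n - (xbar n)\<^sup>2) (cx2 - cx\<^sup>2)"
  using root_n_close_to_diff[OF root_n_close_to_tx2
      root_n_close_to_mult[OF root_n_close_to_tx root_n_close_to_tx]]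
  by (simp add: tsx_def[abs_def] power2_eq_square)

lemma root_n_close_to_sqrt_mat2_tx:
  "root_n_close_to M (\<lambda>n \<omega>. sqrt_mat2 1 (tx \<Delta> \<rho> x Z n \<omega>) (tx2 \<Delta> \<rho> x Z n \<omega>) $ i $ j)
    (\<lambda>n \<omega>. sqrt_mat2 1 (xbar n) (x2bar n) $ i $ j) (sqrt_mat2 1 cx cx2 $ i $ j)"
  using A1c by (intro root_n_close_to_sqrt_mat2 root_n_close_to_const[OF eventually_prob_space]
      root_n_close_to_tx root_n_close_to_tx2)
    auto

lemma eventually_sample_variance_pos: "eventually (\<lambda>n. x2bar n - (xbar n)\<^sup>2 > 0) sequentially"
  using A1c by (intro order_tendstoD(1)[OF tendsto_diff[OF A1x2 tendsto_power[OF A1x]]]) simp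

lemma eventually_Etil_eq:
  "eventually (\<lambda>n. \<forall>\<omega>\<in>space (M n). dist (tsx \<Delta> \<rho> x Z n \<omega>) (cx2 - cx\<^sup>2) < cx2 - cx\<^sup>2 \<longrightarrow>
     Etil \<Delta> \<rho> x Z n \<omega> = cmat (sqrt_mat2 1 (tx \<Delta> \<rho> x Z n \<omega>) (tx2 \<Delta> \<rho> x Z n \<omega>))) sequentially"
  by (intro always_eventually allI ballI impI Etil_eq_cmat_sqrt_mat2) (simp add: dist_real_def)

lemma conv_oprob_root_n_Etil_Ehat:
  "conv_oprob M (\<lambda>n \<omega>. sqrt (real n) *\<^sub>R (Etil \<Delta> \<rho> x Z n \<omega> - cmat (Ehat x n))) 0"
proof -
  let ?D = "\<lambda>n \<omega>. sqrt (real n) *\<^sub>R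
    (sqrt_mat2 1 (tx \<Delta> \<rho> x Z n \<omega>) (tx2 \<Delta> \<rho> x Z n \<omega>) - sqrt_mat2 1 (xbar n) (x2bar n))"
  have "conv_oprob M ?D 0"
    using root_n_close_to_sqrt_mat2_tx unfolding root_n_close_to_def root_n_close_def
    by (intro conv_oprob_vec[OF eventually_prob_space] conv_oprob_vec[OF eventually_prob_space]) simp
  from conv_oprob_cmat[OF this] have "conv_oprob M (\<lambda>n \<omega>. cmat (?D n \<omega>)) 0"
    unfolding cmat_zero .
  then show ?thesis
  proof (rule conv_oprob_cong_on[OF _ root_n_close_toD(2)[OF root_n_close_to_tsx]])
    show "cx2 - cx\<^sup>2 > 0" using A1c by simp
    show "eventually (\<lambda>n. \<forall>\<omega>\<in>space (M n). dist (tsx \<Delta> \<rho> x Z n \<omega>) (cx2 - cx\<^sup>2) < cx2 - cx\<^sup>2 \<longrightarrow>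
        sqrt (real n) *\<^sub>R (Etil \<Delta> \<rho> x Z n \<omega> - cmat (Ehat x n)) = cmat (?D n \<omega>)) sequentially"
      using eventually_Etil_eq eventually_sample_variance_pos eventually_gt_at_top[of 0]
      by eventually_elim (simp add: Ehat_eq_sqrt_mat2 cmat_scaleR_diff)
  qed
qed

lemma conv_oprob_Etil: "conv_oprob M (Etil \<Delta> \<rho> x Z) (cmat (sqrt_mat2 1 cx cx2))"
proof -
  have "conv_oprob M (\<lambda>n \<omega>. sqrt_mat2 1 (tx \<Delta> \<rho> x Z n \<omega>) (tx2 \<Delta> \<rho> x Z n \<omega>)) (sqrt_mat2 1 cx cx2)"
    using root_n_close_to_sqrt_mat2_tx unfolding root_n_close_to_def
    by (intro conv_oprob_vec[OF eventually_prob_space] conv_oprob_vec[OF eventually_prob_space]) simp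
  from conv_oprob_cmat[OF this] show ?thesis
  proof (rule conv_oprob_cong_on[OF _ root_n_close_toD(2)[OF root_n_close_to_tsx] _ eventually_Etil_eq])
    show "cx2 - cx\<^sup>2 > 0" using A1c by simp
  qed
qed

lemma conv_oprob_ty_txy:
  "conv_oprob M (\<lambda>n \<omega>. vector [ty \<Delta> \<rho> y Z n \<omega>, txy \<Delta> \<rho> x y Z n \<omega>] :: real^2)
     (vector [\<beta>2 + \<beta>1 * cx, \<beta>2 * cx + \<beta>1 * cx2])"
proof (rule conv_oprob_vec[OF eventually_prob_space])
  fix i :: 2
  show "conv_oprob M (\<lambda>n \<omega>. (vector [ty \<Delta> \<rho> y Z n \<omega>, txy \<Delta> \<rho> x y Z n \<omega>] :: real^2) $ i)
      ((vector [\<beta>2 + \<beta>1 * cx, \<beta>2 * cx + \<beta>1 * cx2] :: real^2) $ i)"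
    using exhaust_2[of i] root_n_close_to_ty[THEN root_n_close_toD(2)]
      root_n_close_to_txy[THEN root_n_close_toD(2)]
    by auto
qed

end

theorem lemma5p10:
  fixes M :: "nat \<Rightarrow> 'a measure"
    and x :: "nat \<Rightarrow> nat \<Rightarrow> real"
    and y :: "nat \<Rightarrow> nat \<Rightarrow> 'a \<Rightarrow> real"
    and Z :: "nat \<Rightarrow> nat \<Rightarrow> 'a \<Rightarrow> real"
    and \<Delta> \<rho> :: "nat \<Rightarrow> real"
    and \<sigma>e \<beta>2 \<beta>1 cx cx2 \<eta> :: real
  assumes \<sigma>e_pos: "\<sigma>e > 0"
    and prob: "\<And>n. n > 2 \<Longrightarrow> prob_space (M n)"
    and y_distr: "\<And>n i. n > 2 \<Longrightarrow> i < n \<Longrightarrow>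
                   distributed (M n) lborel (y n i) (normal_density (\<beta>2 + \<beta>1 * x n i) \<sigma>e)"
    and Z_distr: "\<And>n j. n > 2 \<Longrightarrow> j < 5 \<Longrightarrow> distributed (M n) lborel (Z n j) std_normal_density"
    and indep: "\<And>n. n > 2 \<Longrightarrow> prob_space.indep_vars (M n) (\<lambda>_. borel)
                   (\<lambda>k. case k of Inl i \<Rightarrow> y n i | Inr j \<Rightarrow> Z n j) ({..<n} <+> {..<5})"
    and \<Delta>_pos: "\<And>n. n > 2 \<Longrightarrow> \<Delta> n > 0"
    and \<rho>_pos: "\<And>n. n > 2 \<Longrightarrow> \<rho> n > 0"
    and A1x: "(\<lambda>n. mean n (\<lambda>i. x n i)) \<longlonglongrightarrow> cx"
    and A1x2: "(\<lambda>n. mean n (\<lambda>i. (x n i)^2)) \<longlonglongrightarrow> cx2"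
    and A1c: "cx2 > cx^2"
    and A2: "(\<lambda>n. (\<Sum>i<n. ((\<beta>2 + \<beta>1 * x n i)
                  - ((\<beta>2 + \<beta>1 * mean n (\<lambda>k. x n k)) + 0 * x n i))^2) / \<sigma>e^2) \<longlonglongrightarrow> \<eta>^2"
    and A3a: "(\<lambda>n. (\<Delta> n)^2 / (\<rho> n * real n)) \<longlonglongrightarrow> 0"
    and A3b: "(\<lambda>n. (\<Delta> n)^4 / (\<rho> n * real n)) \<longlonglongrightarrow> 0"
    and A4y: "(\<lambda>n. measure (M n) {\<omega> \<in> space (M n). \<exists>i<n. y n i \<omega> \<notin> {- \<Delta> n .. \<Delta> n}}) \<longlonglongrightarrow> 0"
    and A4x: "\<And>n i. n > 2 \<Longrightarrow> i < n \<Longrightarrow> x n i \<in> {- \<Delta> n .. \<Delta> n}"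
  shows
    "let cy = \<beta>2 + \<beta>1 * cx;
         cxy = \<beta>2 * cx + \<beta>1 * cx2;
         ca = cxy - cx * cy;
         cb = cx2 - cx^2;
         cy2 = \<beta>2^2 + 2 * cx * \<beta>1 * \<beta>2 + \<beta>1^2 * cx2 + \<sigma>e^2;
         Chalf = (1 / sqrt (cx2 + 1 + 2 * sqrt cb)) *\<^sub>R
                   (vector [vector [1 + sqrt cb, cx], vector [cx, cx2 + sqrt cb]] :: real^2^2);
         xb = (\<lambda>n. mean n (\<lambda>i. x n i));
         x2b = (\<lambda>n. mean n (\<lambda>i. (x n i)^2));
         yb = (\<lambda>n \<omega>. mean n (\<lambda>i. y n i \<omega>));
         xyb = (\<lambda>n \<omega>. mean n (\<lambda>i. x n i * y n i \<omega>));
         sxh = (\<lambda>n. x2b n - (xb n)^2)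
     in
      conv_prob M (\<lambda>n \<omega>. sqrt (real n) * \<bar>tx \<Delta> \<rho> x Z n \<omega> - xb n\<bar>) 0
    \<and> conv_prob M (tx \<Delta> \<rho> x Z) cx
    \<and> conv_prob M (\<lambda>n \<omega>. sqrt (real n) * \<bar>ty \<Delta> \<rho> y Z n \<omega> - yb n \<omega>\<bar>) 0
    \<and> conv_prob M (ty \<Delta> \<rho> y Z) cy
    \<and> conv_prob M (\<lambda>n \<omega>. sqrt (real n) * \<bar>tx2 \<Delta> \<rho> x Z n \<omega> - x2b n\<bar>) 0
    \<and> conv_prob M (tx2 \<Delta> \<rho> x Z) cx2
    \<and> conv_prob M (\<lambda>n \<omega>. sqrt (real n) * \<bar>txy \<Delta> \<rho> x y Z n \<omega> - xyb n \<omega>\<bar>) 0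
    \<and> conv_prob M (txy \<Delta> \<rho> x y Z) cxy
    \<and> conv_prob M (\<lambda>n \<omega>. sqrt (real n) * \<bar>(tx \<Delta> \<rho> x Z n \<omega>)^2 - (xb n)^2\<bar>) 0
    \<and> conv_prob M (\<lambda>n \<omega>. sqrt (real n) *
          \<bar>tx \<Delta> \<rho> x Z n \<omega> * ty \<Delta> \<rho> y Z n \<omega> - xb n * yb n \<omega>\<bar>) 0
    \<and> conv_prob M (\<lambda>n \<omega>. txy \<Delta> \<rho> x y Z n \<omega> - tx \<Delta> \<rho> x Z n \<omega> * ty \<Delta> \<rho> y Z n \<omega>) ca
    \<and> conv_prob M (tsx \<Delta> \<rho> x Z) cb \<and> cb \<noteq> 0
    \<and> conv_prob M (\<lambda>n \<omega>. sqrt (real n) * (tsx \<Delta> \<rho> x Z n \<omega> - sxh n)) 0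
    \<and> conv_prob M (\<lambda>n \<omega>. sqrt (real n) *\<^sub>R (Etil \<Delta> \<rho> x Z n \<omega> - cmat (Ehat x n))) 0
    \<and> conv_prob M (Etil \<Delta> \<rho> x Z) (cmat Chalf)
    \<and> conv_prob M (\<lambda>n \<omega>. vector [ty \<Delta> \<rho> y Z n \<omega>, txy \<Delta> \<rho> x y Z n \<omega>] :: real^2) (vector [cy, cxy])
    \<and> conv_prob M (ty2 \<Delta> \<rho> y Z) cy2"
proof -
  interpret dp_linear_regression M x y Z \<Delta> \<rho> \<sigma>e \<beta>2 \<beta>1 cx cx2
    by (rule dp_linear_regression.intro[OF \<sigma>e_pos prob y_distr Z_distr indep A1x A1x2 A1c A3a A3b A4y A4x])
  have Chalf: "(1 / sqrt (cx2 + 1 + 2 * sqrt (cx2 - cx\<^sup>2))) *\<^sub>R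
      (vector [vector [1 + sqrt (cx2 - cx\<^sup>2), cx], vector [cx, cx2 + sqrt (cx2 - cx\<^sup>2)]] :: real^2^2)
      = sqrt_mat2 1 cx cx2"
    by (simp add: sqrt_mat2_def Let_def add.commute[of 1 cx2])
  have sq: "root_n_close_to M (\<lambda>n \<omega>. (tx \<Delta> \<rho> x Z n \<omega>)\<^sup>2) (\<lambda>n \<omega>. (xbar n)\<^sup>2) (cx * cx)"
    using root_n_close_to_mult[OF root_n_close_to_tx root_n_close_to_tx] by (simp add: power2_eq_square)
  note close = root_n_close_to_tx root_n_close_to_ty root_n_close_to_tx2 root_n_close_to_txy sq
    root_n_close_to_mult[OF root_n_close_to_tx root_n_close_to_ty]
  note conv = close[THEN root_n_close_toD(2)] root_n_close_to_tsx[THEN root_n_close_toD(2)]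
  show ?thesis
    unfolding Let_def Chalf
    using A1c by (intro conjI conv_oprob_imp_conv_prob conv root_n_close_abs close[THEN root_n_close_toD(1)]
        root_n_close_to_tsx[THEN root_n_close_toD(1), unfolded root_n_close_def]
        conv_oprob_diff[OF conv(4) conv_oprob_mult[OF conv(1) conv(2)]]
        conv_oprob_root_n_Etil_Ehat conv_oprob_Etil conv_oprob_ty_txy conv_oprob_ty2) simp
qed

end
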